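(* Let $A_\Gamma$ be a right-angled Artin group. Then the centre $Z(\mathrm{Aut}(A_\Gamma))$ has order at most two. In particular, if $A_\Gamma$ is not free abelian, then $\mathrm{Aut}(A_\Gamma)$ has trivial centre.
   Context: For a finite simplicial graph $\Gamma=(V,E)$, the right-angled Artin group $A_\Gamma$ is the group with presentation $\langle v\in V\mid [v,w]=1 \text{ whenever }(v,w)\in E\rangle$. *)

theory Defs
  imports "HOL-Algebra.Algebra"
begin

text \<open>Letters of words: a generator together with a sign (True = the generator,
False = its inverse).\<close>

definition raag_word :: "'v set \<Rightarrow> ('v \<times> bool) list set" where
  "raag_word V = {w. set w \<subseteq> V \<times> UNIV}"

definition raag_step :: "'v set \<Rightarrow> ('v \<Rightarrow> 'v \<Rightarrow> bool) \<Rightarrow> (('v \<times> bool) list \<times> ('v \<times> bool) list) set" where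
  "raag_step V E =
     {(xs @ [(v,b),(v,\<not>b)] @ ys, xs @ ys) | xs ys v b.
         xs \<in> raag_word V \<and> ys \<in> raag_word V \<and> v \<in> V}
   \<union> {(xs @ [(v,b),(w,c)] @ ys, xs @ [(w,c),(v,b)] @ ys) | xs ys v w b c.
         xs \<in> raag_word V \<and> ys \<in> raag_word V \<and> v \<in> V \<and> w \<in> V \<and> E v w}"

definition raag_eq :: "'v set \<Rightarrow> ('v \<Rightarrow> 'v \<Rightarrow> bool) \<Rightarrow> (('v \<times> bool) list \<times> ('v \<times> bool) list) set" where
  "raag_eq V E = (raag_step V E \<union> (raag_step V E)\<inverse>)\<^sup>*"

definition raag_class :: "'v set \<Rightarrow> ('v \<Rightarrow> 'v \<Rightarrow> bool) \<Rightarrow> ('v \<times> bool) list \<Rightarrow> ('v \<times> bool) list set" where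
  "raag_class V E w = raag_eq V E `` {w}"

text \<open>The right-angled Artin group A_Gamma = < V | [v,w] = 1 for (v,w) in E >,
realised as words over V^{\<plusminus>1} modulo the relations above, with concatenation.\<close>

definition raag_mult :: "'v set \<Rightarrow> ('v \<Rightarrow> 'v \<Rightarrow> bool) \<Rightarrow> ('v \<times> bool) list set \<Rightarrow> ('v \<times> bool) list set \<Rightarrow> ('v \<times> bool) list set" where
  "raag_mult V E P Q = raag_class V E ((SOME p. p \<in> P) @ (SOME q. q \<in> Q))"

definition RAAG :: "'v set \<Rightarrow> ('v \<Rightarrow> 'v \<Rightarrow> bool) \<Rightarrow> ('v \<times> bool) list set monoid" where
  "RAAG V E =
     \<lparr>carrier = raag_class V E ` raag_word V,
      monoid.mult = raag_mult V E,
      monoid.one = raag_class V E []\<rparr>"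

definition group_center :: "('a, 'b) monoid_scheme \<Rightarrow> 'a set" where
  "group_center G = {z \<in> carrier G. \<forall>g \<in> carrier G. z \<otimes>\<^bsub>G\<^esub> g = g \<otimes>\<^bsub>G\<^esub> z}"

definition simplicial_graph :: "'v set \<Rightarrow> ('v \<Rightarrow> 'v \<Rightarrow> bool) \<Rightarrow> bool" where
  "simplicial_graph V E \<longleftrightarrow> finite V \<and> (\<forall>v w. E v w \<longrightarrow> E w v) \<and> (\<forall>v. \<not> E v v)
      \<and> (\<forall>v w. E v w \<longrightarrow> v \<in> V \<and> w \<in> V)"

end

theory Submission
  imports Defs
begin

text \<open>
  Let \<open>\<phi>\<close> be central in \<open>Aut(A\<^sub>\<Gamma>)\<close>. Since \<open>\<phi>\<close> commutes with inner automorphisms,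
  \<open>v\<^sup>-\<^sup>1\<phi>(v)\<close> is central in \<open>A\<^sub>\<Gamma>\<close> for every vertex \<open>v\<close>. A central element is represented by a
  word in the cone vertices (those adjacent to all other vertices): two reduced words for the same
  element differ only by swaps of commuting letters, so the subword on two non-adjacent vertices
  is an invariant, and this invariant rules out any other letter in a central reduced word.
  Commuting with the inversion of a vertex \<open>u \<noteq> v\<close> kills the \<open>u\<close>-exponent of \<open>v\<^sup>-\<^sup>1\<phi>(v)\<close>, hence
  \<open>\<phi>(v) = v\<^bsup>m(v)\<^esub>\<close>, with \<open>m(v) = 1\<close> unless \<open>v\<close> is a cone vertex. If some vertex \<open>x\<close> is not a
  cone vertex, commuting with the transvections \<open>x \<mapsto> xc\<close> gives \<open>m(c) = 1\<close> for the cone vertices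
  \<open>c\<close>, so \<open>\<phi> = id\<close>. Otherwise \<open>A\<^sub>\<Gamma>\<close> is free abelian, the transvections force \<open>m\<close> to be
  constant, and surjectivity of \<open>\<phi>\<close> leaves \<open>m = \<plusminus>1\<close>.
\<close>

section \<open>Commuting elements and central automorphisms\<close>

lemma (in group) inv_commute:
  assumes "x \<in> carrier G" "y \<in> carrier G" "x \<otimes> y = y \<otimes> x"
  shows "inv x \<otimes> y = y \<otimes> inv x"
proof -
  have "inv x \<otimes> y = inv x \<otimes> (y \<otimes> x) \<otimes> inv x" using assms(1,2) by (simp add: m_assoc)
  also have "\<dots> = inv x \<otimes> (x \<otimes> y) \<otimes> inv x" using assms(3) by simp
  also have "\<dots> = y \<otimes> inv x" using assms(1,2) by (simp add: m_assoc[symmetric])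
  finally show ?thesis .
qed

lemma (in group) inv_commute_both:
  assumes "x \<in> carrier G" "y \<in> carrier G" "x \<otimes> y = y \<otimes> x"
  shows "x \<otimes> inv y = inv y \<otimes> x" "inv x \<otimes> inv y = inv y \<otimes> inv x"
  using inv_commute[of y x] inv_commute[of y "inv x"] inv_commute[of x y] assms by simp_all

lemma (in group) commute_mult_right:
  assumes "p \<in> carrier G" "q \<in> carrier G" "r \<in> carrier G" "p \<otimes> q = q \<otimes> p" "p \<otimes> r = r \<otimes> p"
  shows "p \<otimes> (q \<otimes> r) = (q \<otimes> r) \<otimes> p"
proof -
  have "p \<otimes> (q \<otimes> r) = q \<otimes> (p \<otimes> r)" using assms(1-4) by (simp add: m_assoc[symmetric])
  also have "\<dots> = (q \<otimes> r) \<otimes> p" using assms(1-3,5) by (simp add: m_assoc)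
  finally show ?thesis .
qed

lemma (in group) conj_eq_imp_commute:
  assumes "a \<in> carrier G" "b \<in> carrier G" "c \<in> carrier G" "a \<otimes> b \<otimes> inv a = c \<otimes> b \<otimes> inv c"
  shows "(inv c \<otimes> a) \<otimes> b = b \<otimes> (inv c \<otimes> a)"
proof -
  have "(inv c \<otimes> a) \<otimes> b = inv c \<otimes> (a \<otimes> b \<otimes> inv a) \<otimes> a"
    using assms(1-3) by (simp add: m_assoc)
  also have "\<dots> = inv c \<otimes> (c \<otimes> b \<otimes> inv c) \<otimes> a" using assms(4) by simp
  also have "\<dots> = b \<otimes> (inv c \<otimes> a)" using assms(1-3) by (simp add: m_assoc[symmetric])
  finally show ?thesis .
qed

lemma carrier_AutoGroup: "carrier (AutoGroup G) = auto G"
  by (simp add: AutoGroup_def BijGroup_def)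

lemma mult_AutoGroup:
  "f \<in> auto G \<Longrightarrow> g \<in> auto G \<Longrightarrow> f \<otimes>\<^bsub>AutoGroup G\<^esub> g = compose (carrier G) f g"
  by (simp add: AutoGroup_def BijGroup_def auto_def)

lemma one_AutoGroup: "\<one>\<^bsub>AutoGroup G\<^esub> = (\<lambda>x\<in>carrier G. x)"
  by (simp add: AutoGroup_def BijGroup_def)

lemma auto_imp_hom: "f \<in> auto G \<Longrightarrow> f \<in> hom G G"
  by (simp add: auto_def)

lemma auto_imp_bij_betw: "f \<in> auto G \<Longrightarrow> bij_betw f (carrier G) (carrier G)"
  by (simp add: auto_def Bij_def)

lemma auto_imp_extensional: "f \<in> auto G \<Longrightarrow> f \<in> extensional (carrier G)"
  by (simp add: auto_def Bij_def)

lemma id_in_hom: "(\<lambda>x. x) \<in> hom G G"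
  by (rule homI) auto

lemma (in group) restrict_in_autoI:
  assumes hf: "f \<in> hom G G" and hg: "g \<in> hom G G"
    and gf: "\<And>x. x \<in> carrier G \<Longrightarrow> g (f x) = x" and fg: "\<And>x. x \<in> carrier G \<Longrightarrow> f (g x) = x"
  shows "restrict f (carrier G) \<in> auto G"
proof -
  have "restrict f (carrier G) \<in> hom G G" using hom_restrict[OF hf] by simp
  moreover have "bij_betw f (carrier G) (carrier G)"
    by (rule bij_betwI[where g = g]) (use hf hg gf fg in \<open>auto simp: hom_def\<close>)
  then have "restrict f (carrier G) \<in> Bij (carrier G)"
    by (simp add: Bij_def bij_betw_restrict_eq)
  ultimately show ?thesis by (simp add: auto_def)
qed

lemma (in group) inner_auto:
  assumes g: "g \<in> carrier G"
  shows "(\<lambda>x\<in>carrier G. g \<otimes> x \<otimes> inv g) \<in> auto G"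
proof -
  have "(\<lambda>x. g \<otimes> x \<otimes> inv g) \<in> hom G G" "(\<lambda>x. inv g \<otimes> x \<otimes> g) \<in> hom G G"
    by (auto intro!: homI simp: g m_assoc[symmetric]) (simp_all add: g m_assoc)
  then show ?thesis
    by (rule restrict_in_autoI) (simp_all add: g m_assoc, simp_all add: g m_assoc[symmetric])
qed

lemma central_auto_in_auto: "\<phi> \<in> group_center (AutoGroup G) \<Longrightarrow> \<phi> \<in> auto G"
  by (simp add: group_center_def carrier_AutoGroup)

lemma central_auto_commute:
  assumes "\<phi> \<in> group_center (AutoGroup G)" "\<alpha> \<in> auto G" "x \<in> carrier G"
  shows "\<phi> (\<alpha> x) = \<alpha> (\<phi> x)"
proof -
  have "\<phi> \<otimes>\<^bsub>AutoGroup G\<^esub> \<alpha> = \<alpha> \<otimes>\<^bsub>AutoGroup G\<^esub> \<phi>"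
    using assms(1,2) by (simp add: group_center_def carrier_AutoGroup)
  then have "compose (carrier G) \<phi> \<alpha> x = compose (carrier G) \<alpha> \<phi> x"
    using assms(1,2) central_auto_in_auto by (metis mult_AutoGroup)
  then show ?thesis using assms(3) by (simp add: compose_def)
qed

lemma (in group) group_hom_auto: "f \<in> auto G \<Longrightarrow> group_hom G G f"
  by (rule group_hom.intro[OF is_group is_group]) (simp add: group_hom_axioms_def auto_imp_hom)

lemma (in group) central_auto_quotient_central:
  assumes p: "\<phi> \<in> group_center (AutoGroup G)" and g: "g \<in> carrier G" and y: "y \<in> carrier G"
  shows "(inv g \<otimes> \<phi> g) \<otimes> y = y \<otimes> (inv g \<otimes> \<phi> g)"
proof -
  have pa: "\<phi> \<in> auto G" using central_auto_in_auto[OF p] .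
  interpret ph: group_hom G G \<phi> by (rule group_hom_auto[OF pa])
  have "y \<in> \<phi> ` carrier G" using auto_imp_bij_betw[OF pa] y by (simp add: bij_betw_def)
  then obtain x where x: "x \<in> carrier G" "y = \<phi> x" by auto
  have "\<phi> g \<otimes> \<phi> x \<otimes> inv (\<phi> g) = \<phi> (g \<otimes> x \<otimes> inv g)" using x g by simp
  also have "\<dots> = g \<otimes> \<phi> x \<otimes> inv g"
    using central_auto_commute[OF p inner_auto[OF g] x(1)] x g by simp
  finally show ?thesis using conj_eq_imp_commute[of "\<phi> g" "\<phi> x" g] x g by simp
qed

section \<open>The group structure on words\<close>

definition inv_letter :: "'v \<times> bool \<Rightarrow> 'v \<times> bool" where
  "inv_letter a = (fst a, \<not> snd a)"

lemma inv_letter_inv_letter[simp]: "inv_letter (inv_letter a) = a"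
  by (simp add: inv_letter_def)

lemma fst_inv_letter[simp]: "fst (inv_letter a) = fst a"
  by (simp add: inv_letter_def)

lemma raag_word_simps[simp]:
  "[] \<in> raag_word V"
  "(a # w) \<in> raag_word V \<longleftrightarrow> fst a \<in> V \<and> w \<in> raag_word V"
  "(u @ w) \<in> raag_word V \<longleftrightarrow> u \<in> raag_word V \<and> w \<in> raag_word V"
  "rev w \<in> raag_word V \<longleftrightarrow> w \<in> raag_word V"
  by (auto simp: raag_word_def mem_Times_iff)

lemma raag_word_map_inv_letter[simp]: "map inv_letter w \<in> raag_word V \<longleftrightarrow> w \<in> raag_word V"
  by (induction w) auto

lemma raag_step_cancelI:
  "xs \<in> raag_word V \<Longrightarrow> ys \<in> raag_word V \<Longrightarrow> v \<in> V \<Longrightarrow>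
   (xs @ [(v, b), (v, \<not> b)] @ ys, xs @ ys) \<in> raag_step V E"
  unfolding raag_step_def by blast

lemma raag_step_swapI:
  "xs \<in> raag_word V \<Longrightarrow> ys \<in> raag_word V \<Longrightarrow> v \<in> V \<Longrightarrow> w \<in> V \<Longrightarrow> E v w \<Longrightarrow>
   (xs @ [(v, b), (w, c)] @ ys, xs @ [(w, c), (v, b)] @ ys) \<in> raag_step V E"
  unfolding raag_step_def by blast

lemma raag_step_cases:
  assumes "(a, b) \<in> raag_step V E"
  obtains xs ys v c where "a = xs @ [(v, c), (v, \<not> c)] @ ys" "b = xs @ ys"
    "xs \<in> raag_word V" "ys \<in> raag_word V" "v \<in> V"
  | xs ys v w c d where "a = xs @ [(v, c), (w, d)] @ ys" "b = xs @ [(w, d), (v, c)] @ ys"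
    "xs \<in> raag_word V" "ys \<in> raag_word V" "v \<in> V" "w \<in> V" "E v w"
  using assms unfolding raag_step_def by blast

lemma raag_step_words: "(a, b) \<in> raag_step V E \<Longrightarrow> a \<in> raag_word V \<and> b \<in> raag_word V"
  by (erule raag_step_cases) auto

lemma raag_eq_word: "(a, b) \<in> raag_eq V E \<Longrightarrow> a \<in> raag_word V \<Longrightarrow> b \<in> raag_word V"
  unfolding raag_eq_def
  by (induction rule: rtrancl_induct) (auto dest: raag_step_words)

lemma raag_eq_sym: "(a, b) \<in> raag_eq V E \<Longrightarrow> (b, a) \<in> raag_eq V E"
  unfolding raag_eq_def by (metis converse_Un converse_converse rtrancl_converseI sup_commute)

lemma raag_eq_trans: "(a, b) \<in> raag_eq V E \<Longrightarrow> (b, c) \<in> raag_eq V E \<Longrightarrow> (a, c) \<in> raag_eq V E"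
  unfolding raag_eq_def by (rule rtrancl_trans)

lemma raag_eq_refl[simp]: "(a, a) \<in> raag_eq V E"
  unfolding raag_eq_def by simp

lemma raag_step_imp_raag_eq: "(a, b) \<in> raag_step V E \<Longrightarrow> (a, b) \<in> raag_eq V E"
  unfolding raag_eq_def by auto

lemma raag_step_cong:
  assumes "(a, b) \<in> raag_step V E" "p \<in> raag_word V" "q \<in> raag_word V"
  shows "(p @ a @ q, p @ b @ q) \<in> raag_step V E"
  using assms(1)
proof (cases rule: raag_step_cases)
  case (1 xs ys v c)
  then show ?thesis
    using raag_step_cancelI[where xs = "p @ xs" and ys = "ys @ q"] assms(2,3) by simp
next
  case (2 xs ys v w c d)
  then show ?thesis using raag_step_swapI[where xs = "p @ xs" and ys = "ys @ q"] assms(2,3) by simp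
qed

lemma raag_eq_cong:
  assumes "(a, b) \<in> raag_eq V E" "p \<in> raag_word V" "q \<in> raag_word V"
  shows "(p @ a @ q, p @ b @ q) \<in> raag_eq V E"
  using assms(1) unfolding raag_eq_def
proof (induction rule: rtrancl_induct)
  case base then show ?case by simp
next
  case (step y z)
  then have "(p @ y @ q, p @ z @ q) \<in> raag_step V E \<union> (raag_step V E)\<inverse>"
    using raag_step_cong[OF _ assms(2,3)] by blast
  then show ?case using step.IH by (rule rtrancl_into_rtrancl[rotated])
qed

lemma raag_eq_congL: "(a, b) \<in> raag_eq V E \<Longrightarrow> p \<in> raag_word V \<Longrightarrow> (p @ a, p @ b) \<in> raag_eq V E"
  using raag_eq_cong[of a b V E p "[]"] by simp

lemma raag_eq_congR: "(a, b) \<in> raag_eq V E \<Longrightarrow> q \<in> raag_word V \<Longrightarrow> (a @ q, b @ q) \<in> raag_eq V E"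
  using raag_eq_cong[of a b V E "[]" q] by simp

lemma raag_eq_append:
  "(a, b) \<in> raag_eq V E \<Longrightarrow> (c, d) \<in> raag_eq V E \<Longrightarrow> a \<in> raag_word V \<Longrightarrow> d \<in> raag_word V
   \<Longrightarrow> (a @ c, b @ d) \<in> raag_eq V E"
  by (meson raag_eq_congL raag_eq_congR raag_eq_trans raag_eq_sym)

lemma raag_step_rev:
  assumes "(a, b) \<in> raag_step V E" "\<And>v w. E v w \<Longrightarrow> E w v"
  shows "(rev a, rev b) \<in> raag_step V E"
  using assms(1)
proof (cases rule: raag_step_cases)
  case (1 xs ys v c)
  then show ?thesis
    using raag_step_cancelI[where xs = "rev ys" and ys = "rev xs" and b = "\<not> c"] by simp
next
  case (2 xs ys v w c d)
  then show ?thesis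
    using raag_step_swapI[where xs = "rev ys" and ys = "rev xs" and v = w and w = v
        and b = d and c = c]
      assms(2) by simp
qed

lemma raag_eq_rev:
  assumes "(a, b) \<in> raag_eq V E" "\<And>v w. E v w \<Longrightarrow> E w v"
  shows "(rev a, rev b) \<in> raag_eq V E"
  using assms(1) unfolding raag_eq_def
proof (induction rule: rtrancl_induct)
  case base then show ?case by simp
next
  case (step y z)
  then have "(rev y, rev z) \<in> raag_step V E \<union> (raag_step V E)\<inverse>"
    using raag_step_rev assms(2) by blast
  then show ?case using step by (meson rtrancl_into_rtrancl)
qed

lemma cancel_pair_raag_eq: "fst a \<in> V \<Longrightarrow> ([a, inv_letter a], []) \<in> raag_eq V E"
  using raag_step_cancelI[where xs = "[]" and ys = "[]" and v = "fst a" and b = "snd a" and E = E]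
  by (simp add: inv_letter_def raag_step_imp_raag_eq)

lemma raag_eq_move:
  assumes "\<forall>b\<in>set w1. E (fst l) (fst b)" "fst l \<in> V" "w1 \<in> raag_word V" "w2 \<in> raag_word V"
  shows "(l # w1 @ w2, w1 @ l # w2) \<in> raag_eq V E"
  using assms
proof (induction w1)
  case Nil then show ?case by simp
next
  case (Cons c w1)
  have "([] @ [l, c] @ (w1 @ w2), [] @ [c, l] @ (w1 @ w2)) \<in> raag_step V E"
    using raag_step_swapI[where xs = "[]" and ys = "w1 @ w2" and v = "fst l" and w = "fst c"
        and b = "snd l" and c = "snd c"] Cons.prems by simp
  then have "(l # c # w1 @ w2, c # l # w1 @ w2) \<in> raag_eq V E"
    by (simp add: raag_step_imp_raag_eq)
  moreover have "([c] @ (l # w1 @ w2) @ [], [c] @ (w1 @ l # w2) @ []) \<in> raag_eq V E"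
    using Cons by (intro raag_eq_cong) auto
  ultimately show ?case using raag_eq_trans by fastforce
qed

lemma raag_class_eq_iff: "raag_class V E u = raag_class V E w \<longleftrightarrow> (u, w) \<in> raag_eq V E"
proof
  assume "raag_class V E u = raag_class V E w"
  moreover have "w \<in> raag_class V E w" by (simp add: raag_class_def)
  ultimately have "w \<in> raag_class V E u" by simp
  then show "(u, w) \<in> raag_eq V E" by (simp add: raag_class_def)
next
  assume "(u, w) \<in> raag_eq V E"
  then show "raag_class V E u = raag_class V E w"
    unfolding raag_class_def using raag_eq_sym raag_eq_trans by blast
qed

lemma raag_class_mem: "x \<in> raag_class V E w \<longleftrightarrow> (w, x) \<in> raag_eq V E"
  unfolding raag_class_def by auto

lemma raag_class_some: "(w, SOME u. u \<in> raag_class V E w) \<in> raag_eq V E"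
  using someI[of "\<lambda>u. u \<in> raag_class V E w" w] by (simp add: raag_class_mem)

lemma raag_mult_class:
  assumes "u \<in> raag_word V" "w \<in> raag_word V"
  shows "raag_mult V E (raag_class V E u) (raag_class V E w) = raag_class V E (u @ w)"
proof -
  let ?p = "SOME p. p \<in> raag_class V E u" and ?q = "SOME q. q \<in> raag_class V E w"
  have p: "(u, ?p) \<in> raag_eq V E" and q: "(w, ?q) \<in> raag_eq V E"
    by (rule raag_class_some)+
  have "(?p @ ?q, u @ w) \<in> raag_eq V E"
    using raag_eq_append[OF raag_eq_sym[OF p] raag_eq_sym[OF q]] raag_eq_word[OF p] assms by simp
  then show ?thesis unfolding raag_mult_def by (simp add: raag_class_eq_iff)
qed

definition inv_word :: "('v \<times> bool) list \<Rightarrow> ('v \<times> bool) list" where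
  "inv_word w = rev (map inv_letter w)"

lemma inv_word_simps[simp]: "inv_word [] = []" "inv_word (a # w) = inv_word w @ [inv_letter a]"
  "inv_word (inv_word w) = w" "inv_word w \<in> raag_word V \<longleftrightarrow> w \<in> raag_word V"
  by (auto simp: inv_word_def rev_map comp_def)

lemma inv_word_right: "w \<in> raag_word V \<Longrightarrow> (w @ inv_word w, []) \<in> raag_eq V E"
proof (induction w)
  case Nil then show ?case by simp
next
  case (Cons a w)
  have "([a] @ (w @ inv_word w) @ [inv_letter a], [a] @ [] @ [inv_letter a]) \<in> raag_eq V E"
    using Cons by (intro raag_eq_cong) auto
  moreover have "([a, inv_letter a], []) \<in> raag_eq V E"
    using cancel_pair_raag_eq[of a V E] Cons.prems by simp
  ultimately show ?case using raag_eq_trans by fastforce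
qed

lemma inv_word_left: "w \<in> raag_word V \<Longrightarrow> (inv_word w @ w, []) \<in> raag_eq V E"
  using inv_word_right[of "inv_word w" V E] by simp

lemma carrier_RAAG: "carrier (RAAG V E) = raag_class V E ` raag_word V"
  by (simp add: RAAG_def)

lemma mult_RAAG: "u \<in> raag_word V \<Longrightarrow> w \<in> raag_word V \<Longrightarrow>
  raag_class V E u \<otimes>\<^bsub>RAAG V E\<^esub> raag_class V E w = raag_class V E (u @ w)"
  by (simp add: RAAG_def raag_mult_class)

lemma one_RAAG: "\<one>\<^bsub>RAAG V E\<^esub> = raag_class V E []"
  by (simp add: RAAG_def)

lemma raag_class_carrier[simp]: "w \<in> raag_word V \<Longrightarrow> raag_class V E w \<in> carrier (RAAG V E)"
  by (simp add: carrier_RAAG)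

lemma group_RAAG: "group (RAAG V E)"
proof (rule groupI)
  fix x assume "x \<in> carrier (RAAG V E)"
  then obtain w where w: "w \<in> raag_word V" "x = raag_class V E w" by (auto simp: carrier_RAAG)
  then have "raag_class V E (inv_word w) \<otimes>\<^bsub>RAAG V E\<^esub> x = \<one>\<^bsub>RAAG V E\<^esub>"
    using inv_word_left[OF w(1)] by (simp add: mult_RAAG one_RAAG raag_class_eq_iff)
  then show "\<exists>y\<in>carrier (RAAG V E). y \<otimes>\<^bsub>RAAG V E\<^esub> x = \<one>\<^bsub>RAAG V E\<^esub>"
    using w by (metis inv_word_simps(4) raag_class_carrier)
qed (auto simp: carrier_RAAG mult_RAAG one_RAAG)

lemma inv_RAAG:
  "w \<in> raag_word V \<Longrightarrow> inv\<^bsub>RAAG V E\<^esub> (raag_class V E w) = raag_class V E (inv_word w)"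
  by (rule group.inv_equality[OF group_RAAG])
     (auto simp: mult_RAAG one_RAAG raag_class_eq_iff inv_word_left)

section \<open>Generators and the universal property\<close>

definition raag_gen :: "'v set \<Rightarrow> ('v \<Rightarrow> 'v \<Rightarrow> bool) \<Rightarrow> 'v \<Rightarrow> ('v \<times> bool) list set" where
  "raag_gen V E v = raag_class V E [(v, True)]"

definition eval_word :: "('h, 'c) monoid_scheme \<Rightarrow> ('v \<Rightarrow> 'h) \<Rightarrow> ('v \<times> bool) list \<Rightarrow> 'h" where
  "eval_word H f w =
     foldr (\<lambda>a acc. (if snd a then f (fst a) else inv\<^bsub>H\<^esub> f (fst a)) \<otimes>\<^bsub>H\<^esub> acc) w \<one>\<^bsub>H\<^esub>"

definition raag_lift :: "('h, 'c) monoid_scheme \<Rightarrow> ('v \<Rightarrow> 'h) \<Rightarrow> ('v \<times> bool) list set \<Rightarrow> 'h" where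
  "raag_lift H f P = eval_word H f (SOME w. w \<in> P)"

lemma eval_word_simps[simp]: "eval_word H f [] = \<one>\<^bsub>H\<^esub>"
  "eval_word H f (a # w) = (if snd a then f (fst a) else inv\<^bsub>H\<^esub> f (fst a)) \<otimes>\<^bsub>H\<^esub> eval_word H f w"
  by (simp_all add: eval_word_def)

locale raag_assignment =
  fixes V :: "'v set" and E :: "'v \<Rightarrow> 'v \<Rightarrow> bool" and H :: "('h, 'c) monoid_scheme"
    and f :: "'v \<Rightarrow> 'h"
  assumes group_H: "group H" and f_carrier: "\<And>v. v \<in> V \<Longrightarrow> f v \<in> carrier H"
    and f_commute: "\<And>u v. E u v \<Longrightarrow> u \<in> V \<Longrightarrow> v \<in> V \<Longrightarrow> f u \<otimes>\<^bsub>H\<^esub> f v = f v \<otimes>\<^bsub>H\<^esub> f u"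
begin

interpretation H: group H by (rule group_H)

lemma eval_word_closed: "w \<in> raag_word V \<Longrightarrow> eval_word H f w \<in> carrier H"
  by (induction w) (auto intro: f_carrier)

lemma eval_word_append:
  "u \<in> raag_word V \<Longrightarrow> w \<in> raag_word V \<Longrightarrow> eval_word H f (u @ w) = eval_word H f u \<otimes>\<^bsub>H\<^esub> eval_word H f w"
  by (induction u) (auto simp: H.m_assoc eval_word_closed f_carrier)

lemma eval_word_raag_step:
  assumes "(a, b) \<in> raag_step V E"
  shows "eval_word H f a = eval_word H f b"
  using assms
proof (cases rule: raag_step_cases)
  case (1 xs ys v c)
  have "eval_word H f ([(v, c), (v, \<not> c)] @ ys) = eval_word H f ys"
    using 1 f_carrier[of v] eval_word_closed[of ys]
    by (cases c) (simp_all add: H.m_assoc[symmetric])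
  then show ?thesis using 1 by (simp add: eval_word_append)
next
  case (2 xs ys v w c d)
  let ?x = "if c then f v else inv\<^bsub>H\<^esub> f v" and ?y = "if d then f w else inv\<^bsub>H\<^esub> f w"
  have fv: "f v \<in> carrier H" and fw: "f w \<in> carrier H" using 2 f_carrier by auto
  have "f v \<otimes>\<^bsub>H\<^esub> f w = f w \<otimes>\<^bsub>H\<^esub> f v" using f_commute 2 by blast
  then have "?x \<otimes>\<^bsub>H\<^esub> ?y = ?y \<otimes>\<^bsub>H\<^esub> ?x"
    using H.inv_commute[OF fv fw] H.inv_commute_both[OF fv fw] by (cases c; cases d) simp_all
  moreover have "eval_word H f ([(v, c), (w, d)] @ ys) = (?x \<otimes>\<^bsub>H\<^esub> ?y) \<otimes>\<^bsub>H\<^esub> eval_word H f ys"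
    "eval_word H f ([(w, d), (v, c)] @ ys) = (?y \<otimes>\<^bsub>H\<^esub> ?x) \<otimes>\<^bsub>H\<^esub> eval_word H f ys"
    using fv fw eval_word_closed[of ys] 2 by (simp_all add: H.m_assoc)
  ultimately show ?thesis using 2 by (simp add: eval_word_append)
qed

lemma eval_word_raag_eq: "(a, b) \<in> raag_eq V E \<Longrightarrow> eval_word H f a = eval_word H f b"
  unfolding raag_eq_def
  by (induction rule: rtrancl_induct) (auto dest: eval_word_raag_step)

lemma raag_lift_class: "raag_lift H f (raag_class V E w) = eval_word H f w"
  unfolding raag_lift_def using eval_word_raag_eq[OF raag_class_some] by metis

lemma raag_lift_hom: "raag_lift H f \<in> hom (RAAG V E) H"
  by (rule homI)
    (auto simp: carrier_RAAG mult_RAAG raag_lift_class eval_word_closed eval_word_append)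

lemma raag_lift_group_hom: "group_hom (RAAG V E) H (raag_lift H f)"
  by (rule group_hom.intro[OF group_RAAG group_H]) (simp add: group_hom_axioms_def raag_lift_hom)

lemma raag_lift_gen: "v \<in> V \<Longrightarrow> raag_lift H f (raag_gen V E v) = f v"
  using f_carrier by (simp add: raag_gen_def raag_lift_class)

end

lemma raag_gen_carrier: "v \<in> V \<Longrightarrow> raag_gen V E v \<in> carrier (RAAG V E)"
  by (simp add: raag_gen_def)

lemma raag_class_letter:
  "v \<in> V \<Longrightarrow> raag_class V E [(v, b)] = (if b then raag_gen V E v else inv\<^bsub>RAAG V E\<^esub> (raag_gen V E v))"
  using inv_RAAG[of "[(v, True)]" V E] by (simp add: raag_gen_def inv_letter_def inv_word_def)

lemma raag_class_Cons:
  "fst a \<in> V \<Longrightarrow> w \<in> raag_word V \<Longrightarrow>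
   raag_class V E (a # w) = raag_class V E [a] \<otimes>\<^bsub>RAAG V E\<^esub> raag_class V E w"
  by (simp add: mult_RAAG)

lemma raag_gen_commute:
  assumes "E a b" "a \<in> V" "b \<in> V"
  shows "raag_gen V E a \<otimes>\<^bsub>RAAG V E\<^esub> raag_gen V E b = raag_gen V E b \<otimes>\<^bsub>RAAG V E\<^esub> raag_gen V E a"
proof -
  have "([] @ [(a, True), (b, True)] @ [], [] @ [(b, True), (a, True)] @ []) \<in> raag_step V E"
    using assms by (intro raag_step_swapI) auto
  then have "raag_class V E [(a, True), (b, True)] = raag_class V E [(b, True), (a, True)]"
    by (simp add: raag_class_eq_iff raag_step_imp_raag_eq)
  then show ?thesis using assms by (simp add: raag_gen_def mult_RAAG)
qed

lemma hom_eq_on_gens: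
  assumes H: "group H" and h: "h1 \<in> hom (RAAG V E) H" "h2 \<in> hom (RAAG V E) H"
    and g: "\<And>v. v \<in> V \<Longrightarrow> h1 (raag_gen V E v) = h2 (raag_gen V E v)"
    and x: "x \<in> carrier (RAAG V E)"
  shows "h1 x = h2 x"
proof -
  interpret h1: group_hom "RAAG V E" H h1
    by (rule group_hom.intro[OF group_RAAG H]) (simp add: group_hom_axioms_def h)
  interpret h2: group_hom "RAAG V E" H h2
    by (rule group_hom.intro[OF group_RAAG H]) (simp add: group_hom_axioms_def h)
  obtain w where w: "w \<in> raag_word V" "x = raag_class V E w" using x by (auto simp: carrier_RAAG)
  have "h1 (raag_class V E w) = h2 (raag_class V E w)" using w(1)
  proof (induction w)
    case Nil
    then show ?case by (metis h1.hom_one h2.hom_one one_RAAG)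
  next
    case (Cons a w)
    have a: "fst a \<in> V" and wV: "w \<in> raag_word V" using Cons.prems by auto
    have "h1 (raag_class V E [a]) = h2 (raag_class V E [a])"
      using g[OF a] raag_class_letter[OF a, of E "snd a"] raag_gen_carrier[OF a, of E]
      by (simp add: h1.hom_inv h2.hom_inv)
    then show ?case
      using raag_class_Cons[OF a wV] Cons.IH[OF wV] a wV by simp
  qed
  then show ?thesis using w by simp
qed

section \<open>Reduced words\<close>

locale simple_graph =
  fixes E :: "'v \<Rightarrow> 'v \<Rightarrow> bool"
  assumes E_sym: "E v w \<Longrightarrow> E w v" and E_irrefl: "\<not> E v v"
begin

fun cancel :: "'v \<times> bool \<Rightarrow> ('v \<times> bool) list \<Rightarrow> ('v \<times> bool) list option" where
  "cancel l [] = None"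
| "cancel l (m # w) =
     (if m = inv_letter l then Some w
      else if E (fst l) (fst m) then map_option (Cons m) (cancel l w) else None)"

lemma cancel_decomp:
  "cancel l w = Some t \<Longrightarrow>
   \<exists>w1 w2. w = w1 @ inv_letter l # w2 \<and> t = w1 @ w2 \<and> (\<forall>a\<in>set w1. E (fst l) (fst a))"
proof (induction w arbitrary: t)
  case Nil then show ?case by simp
next
  case (Cons m w)
  show ?case
  proof (cases "m = inv_letter l")
    case True then show ?thesis using Cons.prems by (intro exI[of _ "[]"] exI[of _ t]) auto
  next
    case False
    with Cons.prems obtain t' where t': "E (fst l) (fst m)" "cancel l w = Some t'" "t = m # t'"
      by (auto split: if_splits)
    from Cons.IH[OF t'(2)] obtain w1 w2
      where "w = w1 @ inv_letter l # w2 \<and> t' = w1 @ w2 \<and> (\<forall>a\<in>set w1. E (fst l) (fst a))"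
      by blast
    then show ?thesis using t' by (intro exI[of _ "m # w1"] exI[of _ w2]) auto
  qed
qed

lemma cancel_append_commuting:
  "(\<forall>a\<in>set w1. E (fst l) (fst a)) \<Longrightarrow> cancel l (w1 @ w2) = map_option ((@) w1) (cancel l w2)"
proof (induction w1)
  case Nil then show ?case by (simp add: option.map_ident)
next
  case (Cons m w1)
  then have "m \<noteq> inv_letter l" using E_irrefl by (metis fst_inv_letter list.set_intros(1))
  with Cons show ?case by (simp add: option.map_comp comp_def)
qed

lemma cancel_commuting_prefix:
  "(\<forall>a\<in>set w1. E (fst l) (fst a)) \<Longrightarrow> cancel l (w1 @ inv_letter l # w2) = Some (w1 @ w2)"
  by (simp add: cancel_append_commuting)

lemma cancel_Cons_commuting:
  "E (fst l) (fst m) \<Longrightarrow> cancel l (m # w) = map_option (Cons m) (cancel l w)"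
  using E_irrefl by (auto simp: inv_letter_def prod_eq_iff)

lemma cancel_diamond:
  assumes "cancel l w = Some w1" "E (fst l) (fst m)"
  shows "(cancel m w = None \<longrightarrow> cancel m w1 = None) \<and>
         (\<forall>w2. cancel m w = Some w2 \<longrightarrow> (\<exists>w12. cancel m w1 = Some w12 \<and> cancel l w2 = Some w12))"
  using assms
proof (induction w arbitrary: w1)
  case (Cons a r)
  have "E (fst m) (fst l)" using Cons.prems(2) E_sym by blast
  then show ?case
    using Cons E_irrefl by (auto split: if_splits simp: inv_letter_def prod_eq_iff)
qed simp

fun reduced :: "('v \<times> bool) list \<Rightarrow> bool" where
  "reduced [] = True"
| "reduced (m # w) = (cancel m w = None \<and> reduced w)"

definition has_cancelling_pair :: "('v \<times> bool) list \<Rightarrow> bool" where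
  "has_cancelling_pair w \<longleftrightarrow>
     (\<exists>p a q r. w = p @ a # q @ inv_letter a # r \<and> (\<forall>b\<in>set q. E (fst a) (fst b)))"

definition cancellable :: "'v \<times> bool \<Rightarrow> ('v \<times> bool) list \<Rightarrow> bool" where
  "cancellable m w \<longleftrightarrow> (\<exists>q r. w = q @ inv_letter m # r \<and> (\<forall>b\<in>set q. E (fst m) (fst b)))"

lemma cancel_None_iff: "cancel m w = None \<longleftrightarrow> \<not> cancellable m w"
  unfolding cancellable_def
proof
  assume "cancel m w = None"
  then show "\<not> (\<exists>q r. w = q @ inv_letter m # r \<and> (\<forall>b\<in>set q. E (fst m) (fst b)))"
    using cancel_commuting_prefix by fastforce
next
  assume "\<not> (\<exists>q r. w = q @ inv_letter m # r \<and> (\<forall>b\<in>set q. E (fst m) (fst b)))"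
  then show "cancel m w = None" using cancel_decomp by (cases "cancel m w") blast+
qed

lemma has_cancelling_pair_Cons:
  "has_cancelling_pair (m # w) \<longleftrightarrow> cancellable m w \<or> has_cancelling_pair w"
proof
  assume "has_cancelling_pair (m # w)"
  then obtain p a q r where h: "m # w = p @ a # q @ inv_letter a # r" "\<forall>b\<in>set q. E (fst a) (fst b)"
    unfolding has_cancelling_pair_def by blast
  show "cancellable m w \<or> has_cancelling_pair w"
  proof (cases p)
    case Nil then show ?thesis using h by (auto simp: cancellable_def)
  next
    case (Cons c p')
    then have "w = p' @ a # q @ inv_letter a # r" using h by simp
    then show ?thesis unfolding has_cancelling_pair_def using h(2) by blast
  qed
next
  assume "cancellable m w \<or> has_cancelling_pair w"
  then show "has_cancelling_pair (m # w)"
    unfolding has_cancelling_pair_def cancellable_def by (metis append_Nil append_Cons)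
qed

lemma reduced_appendD: "reduced (u @ w) \<Longrightarrow> reduced w"
  by (induction u) auto

lemma reduced_iff_no_cancelling_pair: "reduced w \<longleftrightarrow> \<not> has_cancelling_pair w"
proof (induction w)
  case Nil then show ?case by (simp add: has_cancelling_pair_def)
next
  case (Cons m w) then show ?case by (simp add: has_cancelling_pair_Cons cancel_None_iff)
qed

lemma has_cancelling_pair_rev: "has_cancelling_pair w \<Longrightarrow> has_cancelling_pair (rev w)"
proof -
  assume "has_cancelling_pair w"
  then obtain p a q r where h: "w = p @ a # q @ inv_letter a # r" "\<forall>b\<in>set q. E (fst a) (fst b)"
    unfolding has_cancelling_pair_def by blast
  then have "rev w = rev r @ inv_letter a # rev q @ inv_letter (inv_letter a) # rev p" by simp
  then show "has_cancelling_pair (rev w)"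
    unfolding has_cancelling_pair_def using h(2) by (metis fst_inv_letter set_rev)
qed

lemma reduced_rev[simp]: "reduced (rev w) \<longleftrightarrow> reduced w"
  using has_cancelling_pair_rev[of w] has_cancelling_pair_rev[of "rev w"]
  by (auto simp: reduced_iff_no_cancelling_pair)

definition swap_step :: "(('v \<times> bool) list \<times> ('v \<times> bool) list) set" where
  "swap_step = {(p @ a # b # q, p @ b # a # q) | p q a b. E (fst a) (fst b)}"

abbreviation swap_eq where "swap_eq \<equiv> swap_step\<^sup>*"

lemma swap_stepI: "E (fst a) (fst b) \<Longrightarrow> (p @ a # b # q, p @ b # a # q) \<in> swap_step"
  unfolding swap_step_def by blast

lemma swap_stepI0: "E (fst a) (fst b) \<Longrightarrow> (a # b # q, b # a # q) \<in> swap_step"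
  using swap_stepI[of a b "[]"] by simp

lemma swap_step_sym: "(u, w) \<in> swap_step \<Longrightarrow> (w, u) \<in> swap_step"
  unfolding swap_step_def using E_sym by blast

lemma swap_eq_sym: "(u, w) \<in> swap_eq \<Longrightarrow> (w, u) \<in> swap_eq"
proof (induction rule: rtrancl_induct)
  case base then show ?case by simp
next
  case (step y z) then show ?case using swap_step_sym by (meson converse_rtrancl_into_rtrancl)
qed

lemma swap_step_append: "(u, w) \<in> swap_step \<Longrightarrow> (p @ u, p @ w) \<in> swap_step"
  unfolding swap_step_def by auto (metis append.assoc)

lemma swap_eq_append: "(u, w) \<in> swap_eq \<Longrightarrow> (p @ u, p @ w) \<in> swap_eq"
proof (induction rule: rtrancl_induct)
  case base then show ?case by simp
next
  case (step y z) then show ?case using swap_step_append by (meson rtrancl_into_rtrancl)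
qed

lemma swap_eq_Cons: "(u, w) \<in> swap_eq \<Longrightarrow> (m # u, m # w) \<in> swap_eq"
  using swap_eq_append[of u w "[m]"] by simp

lemma swap_step_length: "(u, w) \<in> swap_step \<Longrightarrow> length u = length w"
  unfolding swap_step_def by auto

lemma swap_eq_length: "(u, w) \<in> swap_eq \<Longrightarrow> length u = length w"
  by (induction rule: rtrancl_induct) (auto dest: swap_step_length)

definition proj_pair :: "'v \<Rightarrow> 'v \<Rightarrow> ('v \<times> bool) list \<Rightarrow> ('v \<times> bool) list" where
  "proj_pair x y w = filter (\<lambda>m. fst m = x \<or> fst m = y) w"

lemma swap_step_proj_pair: "\<not> E x y \<Longrightarrow> (u, w) \<in> swap_step \<Longrightarrow> proj_pair x y u = proj_pair x y w"
  unfolding swap_step_def proj_pair_def using E_irrefl E_sym by auto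

lemma swap_eq_proj_pair:
  assumes "\<not> E x y" "(u, w) \<in> swap_eq"
  shows "proj_pair x y u = proj_pair x y w"
  using assms(2)
proof (induction rule: rtrancl_induct)
  case base then show ?case by simp
next
  case (step y z) then show ?case using swap_step_proj_pair[OF assms(1)] by metis
qed

lemma swap_eq_move: "(\<forall>b\<in>set w1. E (fst a) (fst b)) \<Longrightarrow> (a # w1 @ w2, w1 @ a # w2) \<in> swap_eq"
proof (induction w1)
  case Nil then show ?case by simp
next
  case (Cons c w1)
  have "(a # c # w1 @ w2, c # a # w1 @ w2) \<in> swap_step"
    using Cons.prems by (auto intro!: swap_stepI0)
  moreover have "(c # a # w1 @ w2, c # w1 @ a # w2) \<in> swap_eq"
    using Cons swap_eq_Cons by simp
  ultimately show ?case by (simp add: converse_rtrancl_into_rtrancl)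
qed

text \<open>For reduced \<open>w\<close>, \<open>lmul l w\<close> is a reduced word representing \<open>l # w\<close>.\<close>

definition lmul :: "'v \<times> bool \<Rightarrow> ('v \<times> bool) list \<Rightarrow> ('v \<times> bool) list" where
  "lmul l w = (case cancel l w of None \<Rightarrow> l # w | Some t \<Rightarrow> t)"

definition lmul_word :: "('v \<times> bool) list \<Rightarrow> ('v \<times> bool) list \<Rightarrow> ('v \<times> bool) list" where
  "lmul_word u w = foldr lmul u w"

lemma lmul_word_simps[simp]: "lmul_word [] w = w" "lmul_word (m # u) w = lmul m (lmul_word u w)"
  "lmul_word (u1 @ u2) w = lmul_word u1 (lmul_word u2 w)"
  by (simp_all add: lmul_word_def)

lemma cancel_reduced: "cancel l w = Some t \<Longrightarrow> reduced w \<Longrightarrow> reduced t"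
proof (induction w arbitrary: t)
  case Nil then show ?case by simp
next
  case (Cons a r)
  show ?case
  proof (cases "a = inv_letter l")
    case True then show ?thesis using Cons.prems by simp
  next
    case False
    with Cons.prems obtain r1 where r1: "E (fst l) (fst a)" "cancel l r = Some r1" "t = a # r1"
      by (auto split: if_splits)
    have "reduced r1" using Cons r1 by simp
    moreover have "cancel a r1 = None"
      using cancel_diamond[OF r1(2) r1(1)] Cons.prems(2) by simp
    ultimately show ?thesis using r1 by simp
  qed
qed

lemma lmul_reduced: "reduced w \<Longrightarrow> reduced (lmul l w)"
  unfolding lmul_def by (cases "cancel l w") (auto dest: cancel_reduced)

lemma lmul_word_reduced: "reduced w \<Longrightarrow> reduced (lmul_word u w)"
  by (induction u) (auto intro: lmul_reduced)

lemma cancel_swap_step: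
  assumes "(w, w') \<in> swap_step"
  shows "(cancel l w = None \<and> cancel l w' = None) \<or>
         (\<exists>t t'. cancel l w = Some t \<and> cancel l w' = Some t' \<and> (t, t') \<in> swap_eq)"
proof -
  obtain p q a b where h: "w = p @ a # b # q" "w' = p @ b # a # q" "E (fst a) (fst b)"
    using assms unfolding swap_step_def by blast
  have swap: "(a # b # x, b # a # x) \<in> swap_eq" for x
    using h(3) by (auto intro!: r_into_rtrancl swap_stepI0)
  have "E (fst b) (fst a)" "fst a \<noteq> fst b" using h(3) E_sym E_irrefl by auto
  then show ?thesis unfolding h(1,2)
  proof (induction p)
    case Nil
    then show ?case
      using h(3) swap by (cases "cancel l q") (auto simp: inv_letter_def prod_eq_iff)
  next
    case (Cons c p)
    then show ?case using h(3) by (auto intro: swap_eq_Cons r_into_rtrancl swap_stepI)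
  qed
qed

lemma lmul_swap_step: "(w, w') \<in> swap_step \<Longrightarrow> (lmul l w, lmul l w') \<in> swap_eq"
proof -
  assume a: "(w, w') \<in> swap_step"
  then have "(l # w, l # w') \<in> swap_eq" by (intro swap_eq_Cons r_into_rtrancl)
  then show ?thesis using cancel_swap_step[OF a, of l] unfolding lmul_def by auto
qed

lemma lmul_swap_eq: "(w, w') \<in> swap_eq \<Longrightarrow> (lmul l w, lmul l w') \<in> swap_eq"
proof (induction rule: rtrancl_induct)
  case base then show ?case by simp
next
  case (step y z) then show ?case using lmul_swap_step rtrancl_trans by metis
qed

lemma lmul_word_swap_eq: "(w, w') \<in> swap_eq \<Longrightarrow> (lmul_word u w, lmul_word u w') \<in> swap_eq"
  by (induction u) (auto intro: lmul_swap_eq)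

lemma lmul_inv_letter: "reduced s \<Longrightarrow> (lmul (inv_letter l) (lmul l s), s) \<in> swap_eq"
proof (cases "cancel l s")
  case None
  then show ?thesis unfolding lmul_def by simp
next
  case (Some t)
  assume red: "reduced s"
  obtain w1 w2 where h: "s = w1 @ inv_letter l # w2" "t = w1 @ w2" "\<forall>a\<in>set w1. E (fst l) (fst a)"
    using cancel_decomp[OF Some] by blast
  have "reduced (inv_letter l # w2)" using red h(1) reduced_appendD by blast
  then have "cancel (inv_letter l) t = None" using h by (simp add: cancel_append_commuting)
  then have "lmul (inv_letter l) (lmul l s) = inv_letter l # w1 @ w2"
    using Some h unfolding lmul_def by simp
  moreover have "(inv_letter l # w1 @ w2, s) \<in> swap_eq"
    using h swap_eq_move[of w1 "inv_letter l" w2] by simp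
  ultimately show ?thesis by simp
qed

lemma lmul_commute:
  assumes lm: "E (fst l) (fst m)"
  shows "(lmul l (lmul m w), lmul m (lmul l w)) \<in> swap_eq"
proof -
  have ml: "E (fst m) (fst l)" using lm E_sym by blast
  have "m \<noteq> inv_letter l" "l \<noteq> inv_letter m"
    using lm E_irrefl by (auto simp: inv_letter_def)
  moreover have "(l # m # w, m # l # w) \<in> swap_eq"
    using lm by (auto intro!: r_into_rtrancl swap_stepI0)
  ultimately show ?thesis
    using cancel_diamond[of l w _ m, OF _ lm] cancel_diamond[of m w _ l, OF _ ml] lm ml
    by (cases "cancel m w"; cases "cancel l w") (auto simp: lmul_def cancel_Cons_commuting)
qed

text \<open>Modulo swaps, the defining relations of \<open>A\<^sub>\<Gamma>\<close> hold for the action of letters on reduced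
  words by \<open>lmul\<close>.\<close>

lemma raag_step_lmul_word:
  assumes "(u, u') \<in> raag_step V E" "reduced t"
  shows "(lmul_word u t, lmul_word u' t) \<in> swap_eq"
  using assms(1)
proof (cases rule: raag_step_cases)
  case (1 xs ys v b)
  have "(v, b) = inv_letter (v, \<not> b)" by (simp add: inv_letter_def)
  then have "(lmul (v, b) (lmul (v, \<not> b) (lmul_word ys t)), lmul_word ys t) \<in> swap_eq"
    using lmul_inv_letter[OF lmul_word_reduced[OF assms(2)], of "(v, \<not> b)" ys] by simp
  then show ?thesis using 1 lmul_word_swap_eq by simp
next
  case (2 xs ys v w b c)
  then show ?thesis using lmul_commute[of "(v, b)" "(w, c)"] lmul_word_swap_eq by simp
qed

lemma raag_eq_lmul_word:
  assumes "(u, u') \<in> raag_eq V E" "reduced t"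
  shows "(lmul_word u t, lmul_word u' t) \<in> swap_eq"
  using assms(1) unfolding raag_eq_def
proof (induction rule: rtrancl_induct)
  case base then show ?case by simp
next
  case (step y z)
  then have "(lmul_word y t, lmul_word z t) \<in> swap_eq"
    using raag_step_lmul_word[OF _ assms(2)] swap_eq_sym by blast
  then show ?case using step.IH rtrancl_trans by metis
qed

lemma lmul_word_reduced_Nil: "reduced u \<Longrightarrow> lmul_word u [] = u"
  by (induction u) (auto simp: lmul_def)

corollary raag_eq_reduced_imp_swap_eq:
  "(u, u') \<in> raag_eq V E \<Longrightarrow> reduced u \<Longrightarrow> reduced u' \<Longrightarrow> (u, u') \<in> swap_eq"
  using raag_eq_lmul_word[of u u' V "[]"] lmul_word_reduced_Nil by simp

lemma cancel_length: "cancel l w = Some t \<Longrightarrow> length w = Suc (length t)"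
  by (auto dest!: cancel_decomp)

lemma proj_pair_simps[simp]:
  "proj_pair x y [] = []"
  "proj_pair x y (a # w) = (if fst a = x \<or> fst a = y then a # proj_pair x y w else proj_pair x y w)"
  "proj_pair x y (u @ w) = proj_pair x y u @ proj_pair x y w"
  "proj_pair x y (rev w) = rev (proj_pair x y w)"
  by (simp_all add: proj_pair_def rev_filter)

lemma proj_pair_cancel:
  assumes "\<not> E x y" "fst l = x" "cancel l w = Some t"
  shows "proj_pair x y w = inv_letter l # proj_pair x y t"
proof -
  obtain w1 w2 where w: "w = w1 @ inv_letter l # w2" "t = w1 @ w2" "\<forall>a\<in>set w1. E x (fst a)"
    using cancel_decomp[OF assms(3)] assms(2) by blast
  have "proj_pair x y w1 = []"
    using w(3) assms(1) E_irrefl unfolding proj_pair_def by (induction w1) auto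
  then show ?thesis using w assms(2) by simp
qed

end

section \<open>The centre of a right-angled Artin group\<close>

definition cone_vertices :: "'v set \<Rightarrow> ('v \<Rightarrow> 'v \<Rightarrow> bool) \<Rightarrow> 'v set" where
  "cone_vertices V E = {c \<in> V. \<forall>d\<in>V. d \<noteq> c \<longrightarrow> E c d}"

lemma Cons_eq_snoc_imp_const: "c # R = R @ [c] \<Longrightarrow> \<forall>b\<in>set R. b = c"
  by (induction R) auto

locale raag_graph = simple_graph E for E :: "'v \<Rightarrow> 'v \<Rightarrow> bool" +
  fixes V :: "'v set"
  assumes E_in_V: "E v w \<Longrightarrow> v \<in> V"
begin

lemma lmul_raag_word: "fst l \<in> V \<Longrightarrow> t \<in> raag_word V \<Longrightarrow> lmul l t \<in> raag_word V"
  unfolding lmul_def by (cases "cancel l t") (auto dest!: cancel_decomp)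

lemma lmul_raag_eq: "fst l \<in> V \<Longrightarrow> t \<in> raag_word V \<Longrightarrow> (l # t, lmul l t) \<in> raag_eq V E"
proof (cases "cancel l t")
  case None then show ?thesis by (simp add: lmul_def)
next
  case (Some t')
  assume lV: "fst l \<in> V" and tV: "t \<in> raag_word V"
  obtain w1 w2 where h: "t = w1 @ inv_letter l # w2" "t' = w1 @ w2" "\<forall>a\<in>set w1. E (fst l) (fst a)"
    using cancel_decomp[OF Some] by blast
  have "(l # w1 @ (inv_letter l # w2), w1 @ l # inv_letter l # w2) \<in> raag_eq V E"
    using raag_eq_move[where E = E, OF h(3) lV] tV h by simp
  moreover have "(w1 @ [l, inv_letter l] @ w2, w1 @ [] @ w2) \<in> raag_eq V E"
    using cancel_pair_raag_eq[OF lV] tV h by (intro raag_eq_cong) auto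
  ultimately show ?thesis using h Some raag_eq_trans unfolding lmul_def by fastforce
qed

lemma lmul_word_raag_word: "u \<in> raag_word V \<Longrightarrow> lmul_word u [] \<in> raag_word V"
  by (induction u) (auto intro: lmul_raag_word)

lemma lmul_word_raag_eq: "u \<in> raag_word V \<Longrightarrow> (u, lmul_word u []) \<in> raag_eq V E"
proof (induction u)
  case Nil then show ?case by simp
next
  case (Cons a u)
  have "([a] @ u @ [], [a] @ lmul_word u [] @ []) \<in> raag_eq V E"
    using Cons by (intro raag_eq_cong) auto
  moreover have "(a # lmul_word u [], lmul a (lmul_word u [])) \<in> raag_eq V E"
    using Cons lmul_word_raag_word by (intro lmul_raag_eq) auto
  ultimately show ?case using raag_eq_trans by fastforce
qed

lemma reduced_representative:
  assumes "u \<in> raag_word V"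
  obtains w where "w \<in> raag_word V" "reduced w" "(u, w) \<in> raag_eq V E"
  using assms lmul_word_raag_word lmul_word_raag_eq lmul_word_reduced[of "[]"] by auto

text \<open>The reduced forms of \<open>xw\<close> and \<open>wx\<close> would be swap-equivalent and so have the same subword
  on \<open>{x, y}\<close>; that forces the subword to consist of letters \<open>x\<^sup>\<plusminus>\<^sup>1\<close> only.\<close>

lemma reduced_word_not_commuting:
  assumes w: "w \<in> raag_word V" "reduced w" and a: "a \<in> set w" "fst a \<noteq> x" "\<not> E (fst a) x"
    and x: "x \<in> V"
  shows "((x, True) # w, w @ [(x, True)]) \<notin> raag_eq V E"
proof
  assume eq: "((x, True) # w, w @ [(x, True)]) \<in> raag_eq V E"
  define xl where "xl = (x, True)"
  define y where "y = fst a"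
  let ?P = "proj_pair x y"
  have nE: "\<not> E x y" using a E_sym unfolding y_def by blast
  have fX: "fst xl = x" by (simp add: xl_def)
  define r1 r2 where "r1 = lmul xl w" and "r2 = lmul xl (rev w)"
  have "(xl # w, r1) \<in> raag_eq V E" using lmul_raag_eq w x unfolding r1_def xl_def by simp
  moreover have "(w @ [xl], rev r2) \<in> raag_eq V E"
    using raag_eq_rev[OF lmul_raag_eq[of xl "rev w"]] w x E_sym unfolding r2_def xl_def by simp
  ultimately have "(r1, rev r2) \<in> raag_eq V E"
    using eq raag_eq_sym raag_eq_trans unfolding xl_def by meson
  then have "(r1, rev r2) \<in> swap_eq"
    using lmul_reduced[of w xl] lmul_reduced[of "rev w" xl] w(2)
    unfolding r1_def r2_def by (auto intro!: raag_eq_reduced_imp_swap_eq)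
  then have len: "length r1 = length r2" and proj: "?P r1 = rev (?P r2)"
    using swap_eq_length swap_eq_proj_pair[OF nE] by fastforce+
  obtain c Q where c: "fst c = x" "c # Q = Q @ [c]" "set (?P w) \<subseteq> insert c (set Q)"
  proof (cases "cancel xl w"; cases "cancel xl (rev w)")
    assume "cancel xl w = None" "cancel xl (rev w) = None"
    then show thesis using that[of xl "?P w"] proj fX unfolding r1_def r2_def lmul_def by auto
  next
    fix t1 t2 assume t: "cancel xl w = Some t1" "cancel xl (rev w) = Some t2"
    have p1: "?P w = inv_letter xl # ?P r1" and p2: "rev (?P w) = inv_letter xl # ?P r2"
      using proj_pair_cancel[OF nE fX t(1)] proj_pair_cancel[OF nE fX t(2)] t
      unfolding r1_def r2_def lmul_def by simp_all
    have "?P w = ?P r1 @ [inv_letter xl]"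
      using arg_cong[OF p2, of rev] proj by simp
    then show thesis using that[of "inv_letter xl" "?P r1"] p1 fX by auto
  qed (use len in \<open>auto simp: r1_def r2_def lmul_def dest!: cancel_length\<close>)
  have "a \<in> set (?P w)" using a by (simp add: proj_pair_def y_def)
  then show False using c Cons_eq_snoc_imp_const[OF c(2)] a(2) by auto
qed

lemma cone_gen_central:
  assumes c: "c \<in> cone_vertices V E" and x: "x \<in> carrier (RAAG V E)"
  shows "raag_gen V E c \<otimes>\<^bsub>RAAG V E\<^esub> x = x \<otimes>\<^bsub>RAAG V E\<^esub> raag_gen V E c"
proof -
  interpret G: group "RAAG V E" by (rule group_RAAG)
  have cV: "c \<in> V" using c by (simp add: cone_vertices_def)
  have gc: "raag_gen V E c \<in> carrier (RAAG V E)" using raag_gen_carrier[OF cV] .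
  obtain w where w: "w \<in> raag_word V" "x = raag_class V E w" using x by (auto simp: carrier_RAAG)
  have "raag_gen V E c \<otimes>\<^bsub>RAAG V E\<^esub> raag_class V E w = raag_class V E w \<otimes>\<^bsub>RAAG V E\<^esub> raag_gen V E c"
    using w(1)
  proof (induction w)
    case Nil then show ?case using gc by (simp flip: one_RAAG)
  next
    case (Cons a w)
    obtain u b where ab: "a = (u, b)" by (cases a)
    have u: "fst a \<in> V" and wV: "w \<in> raag_word V" using Cons.prems by auto
    have gu: "raag_gen V E (fst a) \<in> carrier (RAAG V E)" using raag_gen_carrier[OF u] .
    have cu: "raag_gen V E c \<otimes>\<^bsub>RAAG V E\<^esub> raag_gen V E (fst a)
              = raag_gen V E (fst a) \<otimes>\<^bsub>RAAG V E\<^esub> raag_gen V E c"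
      using c u raag_gen_commute[OF _ cV u] by (cases "fst a = c") (auto simp: cone_vertices_def)
    have "raag_gen V E c \<otimes>\<^bsub>RAAG V E\<^esub> raag_class V E [a]
          = raag_class V E [a] \<otimes>\<^bsub>RAAG V E\<^esub> raag_gen V E c"
      using cu G.inv_commute_both(1)[OF gc gu cu] u ab by (simp add: raag_class_letter)
    then show ?case
      using G.commute_mult_right[OF gc _ _ _ Cons.IH[OF wV]] raag_class_Cons[OF u wV] u wV by simp
  qed
  then show ?thesis using w by simp
qed

lemma central_element_cone_word:
  assumes z: "z \<in> carrier (RAAG V E)"
    and c: "\<forall>g\<in>carrier (RAAG V E). z \<otimes>\<^bsub>RAAG V E\<^esub> g = g \<otimes>\<^bsub>RAAG V E\<^esub> z"
  obtains w where "w \<in> raag_word V" "z = raag_class V E w" "\<forall>a\<in>set w. fst a \<in> cone_vertices V E"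
proof -
  obtain u where u: "u \<in> raag_word V" "z = raag_class V E u" using z by (auto simp: carrier_RAAG)
  obtain w where w: "w \<in> raag_word V" "reduced w" "(u, w) \<in> raag_eq V E"
    using reduced_representative[OF u(1)] by blast
  have zw: "z = raag_class V E w" unfolding u(2) raag_class_eq_iff using w(3) .
  have "fst a \<in> cone_vertices V E" if a: "a \<in> set w" for a
  proof -
    have "E (fst a) d" if d: "d \<in> V" "d \<noteq> fst a" for d
    proof (rule ccontr)
      assume "\<not> E (fst a) d"
      then have "((d, True) # w, w @ [(d, True)]) \<notin> raag_eq V E"
        using reduced_word_not_commuting[OF w(1,2) a] d by simp
      moreover have "z \<otimes>\<^bsub>RAAG V E\<^esub> raag_gen V E d = raag_gen V E d \<otimes>\<^bsub>RAAG V E\<^esub> z"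
        using c raag_gen_carrier[OF d(1)] by blast
      ultimately show False
        using zw w(1) d(1) raag_eq_sym by (auto simp: raag_gen_def mult_RAAG raag_class_eq_iff)
    qed
    then show ?thesis using w(1) a by (auto simp: cone_vertices_def raag_word_def)
  qed
  then show ?thesis using that zw w(1) by blast
qed

end

section \<open>Exponent sums\<close>

definition exp_sum :: "'v \<Rightarrow> ('v \<times> bool) list \<Rightarrow> int" where
  "exp_sum u w = (\<Sum>a\<leftarrow>w. if fst a = u then (if snd a then 1 else -1) else 0)"

lemma exp_sum_simps[simp]:
  "exp_sum u [] = 0"
  "exp_sum u (a # w) = (if fst a = u then (if snd a then 1 else -1) else 0) + exp_sum u w"
  "exp_sum u (v @ w) = exp_sum u v + exp_sum u w"
  by (simp_all add: exp_sum_def)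

lemma exp_sum_filter: "exp_sum u (filter (\<lambda>a. fst a \<noteq> v) w) = (if u = v then 0 else exp_sum u w)"
  by (induction w) auto

lemma exp_sum_not_occurring: "\<forall>a\<in>set w. fst a \<noteq> u \<Longrightarrow> exp_sum u w = 0"
  by (induction w) auto

definition gen_pow :: "'v \<Rightarrow> int \<Rightarrow> ('v \<times> bool) list" where
  "gen_pow v k = (if k \<ge> 0 then replicate (nat k) (v, True) else replicate (nat (-k)) (v, False))"

lemma exp_sum_replicate: "exp_sum u (replicate n a) = int n * exp_sum u [a]"
  by (induction n) (simp_all add: algebra_simps)

lemma exp_sum_gen_pow: "exp_sum u (gen_pow v k) = (if u = v then k else 0)"
  by (simp add: gen_pow_def exp_sum_replicate)
lemma set_gen_pow: "a \<in> set (gen_pow v k) \<Longrightarrow> fst a = v"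
  by (auto simp: gen_pow_def split: if_splits)

lemma replicate_raag_word[simp]: "fst a \<in> V \<Longrightarrow> replicate n a \<in> raag_word V"
  by (auto simp: raag_word_def mem_Times_iff)

lemma gen_pow_raag_word[simp]: "v \<in> V \<Longrightarrow> gen_pow v k \<in> raag_word V"
  by (simp add: gen_pow_def)

lemma gen_pow_0[simp]: "gen_pow v 0 = []"
  by (simp add: gen_pow_def)

lemma gen_pow_1: "gen_pow v 1 = [(v, True)]"
  by (simp add: gen_pow_def)

lemma gen_pow_minus_1: "gen_pow v (-1) = [(v, False)]"
  by (simp add: gen_pow_def)

lemma gen_pow_Cons:
  assumes v: "v \<in> V"
  shows "((v, b) # gen_pow v k, gen_pow v (k + (if b then 1 else -1))) \<in> raag_eq V E"
proof (cases b)
  case True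
  show ?thesis
  proof (cases "k \<ge> 0")
    case True
    then have "nat (k + 1) = Suc (nat k)" by simp
    then show ?thesis using True \<open>b\<close> by (simp add: gen_pow_def)
  next
    case False
    then obtain n where n: "nat (-k) = Suc n" by (cases "nat (-k)") auto
    have "([] @ [(v, True), inv_letter (v, True)] @ replicate n (v, False),
           [] @ [] @ replicate n (v, False)) \<in> raag_eq V E"
      using cancel_pair_raag_eq[of "(v, True)" V E] v by (intro raag_eq_cong) auto
    moreover have "gen_pow v (k + 1) = replicate n (v, False)"
      using False n by (auto simp: gen_pow_def)
    ultimately show ?thesis using False n \<open>b\<close> by (simp add: gen_pow_def inv_letter_def)
  qed
next
  case False
  show ?thesis
  proof (cases "k > 0")
    case True
    then obtain n where n: "nat k = Suc n" by (cases "nat k") auto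
    have "([] @ [(v, False), inv_letter (v, False)] @ replicate n (v, True),
           [] @ [] @ replicate n (v, True)) \<in> raag_eq V E"
      using cancel_pair_raag_eq[of "(v, False)" V E] v by (intro raag_eq_cong) auto
    moreover have "gen_pow v (k - 1) = replicate n (v, True)"
      using True n by (auto simp: gen_pow_def)
    ultimately show ?thesis using True n \<open>\<not> b\<close> by (simp add: gen_pow_def inv_letter_def)
  next
    case nk: False
    then have "nat (- (k - 1)) = Suc (nat (-k))" by simp
    then show ?thesis using nk \<open>\<not> b\<close> by (auto simp: gen_pow_def)
  qed
qed

text \<open>A cone vertex commutes with every letter, so a word in cone vertices can be sorted
  vertex by vertex.\<close>

lemma cone_word_collect:
  assumes "\<forall>a\<in>set w. fst a \<in> cone_vertices V E" "v \<in> V"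
  shows "(w, gen_pow v (exp_sum v w) @ filter (\<lambda>a. fst a \<noteq> v) w) \<in> raag_eq V E"
  using assms(1)
proof (induction w)
  case Nil then show ?case by simp
next
  case (Cons a w)
  let ?P = "gen_pow v (exp_sum v w)" and ?F = "filter (\<lambda>a. fst a \<noteq> v) w"
  have aC: "fst a \<in> cone_vertices V E" using Cons.prems by simp
  have aV: "fst a \<in> V" using aC by (simp add: cone_vertices_def)
  have wV: "w \<in> raag_word V"
    using Cons.prems by (auto simp: raag_word_def cone_vertices_def mem_Times_iff)
  have FV: "?F \<in> raag_word V" using wV by (auto simp: raag_word_def)
  have IH: "([a] @ w @ [], [a] @ (?P @ ?F) @ []) \<in> raag_eq V E"
    using Cons aV by (intro raag_eq_cong) auto
  show ?case
  proof (cases "fst a = v")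
    case True
    obtain b where a: "a = (v, b)" using True by (cases a) auto
    have "([] @ (a # ?P) @ ?F, [] @ gen_pow v (exp_sum v w + (if b then 1 else -1)) @ ?F)
          \<in> raag_eq V E"
      using gen_pow_Cons[OF assms(2), of b "exp_sum v w"] a FV by (intro raag_eq_cong) auto
    then show ?thesis using IH a raag_eq_trans by (auto simp: add.commute)
  next
    case False
    have "\<forall>b\<in>set ?P. E (fst a) (fst b)"
      using set_gen_pow aC False assms(2) unfolding cone_vertices_def by fastforce
    then have "(a # ?P @ ?F, ?P @ a # ?F) \<in> raag_eq V E"
      using raag_eq_move[where E = E] aV assms(2) FV by simp
    then show ?thesis using IH False raag_eq_trans by simp
  qed
qed

lemma cone_word_trivial:
  assumes "\<forall>a\<in>set w. fst a \<in> cone_vertices V E" "\<forall>u. exp_sum u w = 0"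
  shows "(w, []) \<in> raag_eq V E"
  using assms
proof (induction "length w" arbitrary: w rule: less_induct)
  case less
  show ?case
  proof (cases w)
    case Nil then show ?thesis by simp
  next
    case (Cons a w')
    let ?v = "fst a"
    let ?F = "filter (\<lambda>b. fst b \<noteq> ?v) w"
    have "?v \<in> V" using less.prems Cons by (simp add: cone_vertices_def)
    then have "(w, ?F) \<in> raag_eq V E" using cone_word_collect less.prems by fastforce
    moreover have "length ?F < length w" using Cons by (simp add: le_imp_less_Suc length_filter_le)
    then have "(?F, []) \<in> raag_eq V E" using less by (simp add: exp_sum_filter)
    ultimately show ?thesis using raag_eq_trans by blast
  qed
qed

definition exponent_sum :: "'v \<Rightarrow> ('v \<times> bool) list set \<Rightarrow> int" where
  "exponent_sum u = raag_lift integer_group (\<lambda>v. if v = u then 1 else 0)"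

lemma raag_assignment_integer_group: "raag_assignment V E integer_group g"
  unfolding raag_assignment_def by (auto simp: group_integer_group)

lemma exponent_sum_hom: "exponent_sum u \<in> hom (RAAG V E) integer_group"
  unfolding exponent_sum_def
  by (rule raag_assignment.raag_lift_hom[OF raag_assignment_integer_group])

lemma exponent_sum_class: "exponent_sum u (raag_class V E w) = exp_sum u w"
proof -
  have "eval_word integer_group (\<lambda>v. if v = u then 1 else 0) w = exp_sum u w"
    by (induction w) auto
  then show ?thesis
    by (simp add: exponent_sum_def
        raag_assignment.raag_lift_class[OF raag_assignment_integer_group])
qed

lemma exponent_sum_gen: "exponent_sum u (raag_gen V E v) = (if v = u then 1 else 0)"
  by (simp add: raag_gen_def exponent_sum_class)

lemma exponent_sum_gen_pow:
  "exponent_sum u (raag_class V E (gen_pow v m)) = (if u = v then m else 0)"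
  by (simp add: exponent_sum_class exp_sum_gen_pow)

section \<open>Inversions and transvections\<close>

lemma raag_lift_auto:
  assumes hf: "raag_assignment V E (RAAG V E) f" and hg: "raag_assignment V E (RAAG V E) g"
    and gf: "\<And>v. v \<in> V \<Longrightarrow> raag_lift (RAAG V E) g (f v) = raag_gen V E v"
    and fg: "\<And>v. v \<in> V \<Longrightarrow> raag_lift (RAAG V E) f (g v) = raag_gen V E v"
  shows "restrict (raag_lift (RAAG V E) f) (carrier (RAAG V E)) \<in> auto (RAAG V E)"
proof -
  interpret G: group "RAAG V E" by (rule group_RAAG)
  have Hf: "raag_lift (RAAG V E) f \<in> hom (RAAG V E) (RAAG V E)"
    by (rule raag_assignment.raag_lift_hom[OF hf])
  have Hg: "raag_lift (RAAG V E) g \<in> hom (RAAG V E) (RAAG V E)"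
    by (rule raag_assignment.raag_lift_hom[OF hg])
  show ?thesis
  proof (rule G.restrict_in_autoI[OF Hf Hg])
    fix x assume x: "x \<in> carrier (RAAG V E)"
    show "raag_lift (RAAG V E) g (raag_lift (RAAG V E) f x) = x"
      using hom_eq_on_gens[OF group_RAAG hom_compose[OF Hf Hg] id_in_hom _ x]
        raag_assignment.raag_lift_gen[OF hf] gf by simp
    show "raag_lift (RAAG V E) f (raag_lift (RAAG V E) g x) = x"
      using hom_eq_on_gens[OF group_RAAG hom_compose[OF Hg Hf] id_in_hom _ x]
        raag_assignment.raag_lift_gen[OF hg] fg by simp
  qed
qed

lemma exponent_sum_scale_hom: "(\<lambda>y. m * exponent_sum u y) \<in> hom (RAAG V E) integer_group"
  by (rule homI) (auto simp: hom_mult[OF exponent_sum_hom] algebra_simps)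

context raag_graph
begin

lemma raag_gen_commute_edge:
  "E a b \<Longrightarrow>
   raag_gen V E a \<otimes>\<^bsub>RAAG V E\<^esub> raag_gen V E b = raag_gen V E b \<otimes>\<^bsub>RAAG V E\<^esub> raag_gen V E a"
  by (rule raag_gen_commute) (use E_in_V E_sym in blast)+

definition inversion_images :: "'v \<Rightarrow> 'v \<Rightarrow> ('v \<times> bool) list set" where
  "inversion_images u v = (if v = u then inv\<^bsub>RAAG V E\<^esub> (raag_gen V E v) else raag_gen V E v)"

lemma raag_assignment_inversion: "raag_assignment V E (RAAG V E) (inversion_images u)"
proof (rule raag_assignment.intro[OF group_RAAG])
  interpret G: group "RAAG V E" by (rule group_RAAG)
  fix a b assume e: "E a b" "a \<in> V" "b \<in> V"
  note ga = raag_gen_carrier[OF e(2), of E] and gb = raag_gen_carrier[OF e(3), of E]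
  show "inversion_images u a \<otimes>\<^bsub>RAAG V E\<^esub> inversion_images u b
        = inversion_images u b \<otimes>\<^bsub>RAAG V E\<^esub> inversion_images u a"
    using G.inv_commute[OF ga gb] G.inv_commute_both[OF ga gb] raag_gen_commute_edge[OF e(1)]
      e(1) E_irrefl by (auto simp: inversion_images_def)
qed (auto simp: inversion_images_def raag_gen_carrier group.inv_closed[OF group_RAAG])

definition inversion :: "'v \<Rightarrow> ('v \<times> bool) list set \<Rightarrow> ('v \<times> bool) list set" where
  "inversion u = restrict (raag_lift (RAAG V E) (inversion_images u)) (carrier (RAAG V E))"

lemma inversion_gen: "v \<in> V \<Longrightarrow> inversion u (raag_gen V E v) = inversion_images u v"
  using raag_assignment.raag_lift_gen[OF raag_assignment_inversion]
  by (simp add: inversion_def raag_gen_carrier)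

lemma inversion_auto: "inversion u \<in> auto (RAAG V E)"
proof -
  interpret G: group "RAAG V E" by (rule group_RAAG)
  interpret I: group_hom "RAAG V E" "RAAG V E" "raag_lift (RAAG V E) (inversion_images u)"
    by (rule raag_assignment.raag_lift_group_hom[OF raag_assignment_inversion])
  have "raag_lift (RAAG V E) (inversion_images u) (inversion_images u v) = raag_gen V E v"
    if "v \<in> V" for v
    using that raag_assignment.raag_lift_gen[OF raag_assignment_inversion] raag_gen_carrier[OF that]
    by (auto simp: inversion_images_def)
  then show ?thesis unfolding inversion_def
    by (intro raag_lift_auto[OF raag_assignment_inversion raag_assignment_inversion])
qed

lemma exponent_sum_inversion:
  assumes x: "x \<in> carrier (RAAG V E)"
  shows "exponent_sum u (inversion u x) = - exponent_sum u x"
proof -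
  have "(exponent_sum u \<circ> inversion u) x = -1 * exponent_sum u x"
  proof (rule hom_eq_on_gens[OF group_integer_group _ exponent_sum_scale_hom _ x])
    show "exponent_sum u \<circ> inversion u \<in> hom (RAAG V E) integer_group"
      using hom_compose[OF auto_imp_hom[OF inversion_auto] exponent_sum_hom] .
    fix v assume v: "v \<in> V"
    interpret exh: group_hom "RAAG V E" integer_group "exponent_sum u"
      unfolding exponent_sum_def
      by (rule raag_assignment.raag_lift_group_hom[OF raag_assignment_integer_group])
    show "(exponent_sum u \<circ> inversion u) (raag_gen V E v) = -1 * exponent_sum u (raag_gen V E v)"
      using inversion_gen[OF v] raag_gen_carrier[OF v]
      by (auto simp: inversion_images_def exponent_sum_gen)
  qed
  then show ?thesis by simp
qed

text \<open>With \<open>d = c\<^sup>\<plusminus>\<^sup>1\<close> for a cone vertex \<open>c \<noteq> x\<close>, \<open>transvection_images x d\<close> defines the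
  transvection \<open>x \<mapsto> xc\<^sup>\<plusminus>\<^sup>1\<close>; all that is needed of \<open>d\<close> is that it is central.\<close>

definition transvection_images :: "'v \<Rightarrow> ('v \<times> bool) list set \<Rightarrow> 'v \<Rightarrow> ('v \<times> bool) list set" where
  "transvection_images x d v = (if v = x then raag_gen V E x \<otimes>\<^bsub>RAAG V E\<^esub> d else raag_gen V E v)"

lemma raag_assignment_transvection:
  assumes x: "x \<in> V" and d: "d \<in> carrier (RAAG V E)"
    and central: "\<And>g. g \<in> carrier (RAAG V E) \<Longrightarrow> g \<otimes>\<^bsub>RAAG V E\<^esub> d = d \<otimes>\<^bsub>RAAG V E\<^esub> g"
  shows "raag_assignment V E (RAAG V E) (transvection_images x d)"
proof (rule raag_assignment.intro[OF group_RAAG])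
  interpret G: group "RAAG V E" by (rule group_RAAG)
  have gx: "raag_gen V E x \<in> carrier (RAAG V E)" using raag_gen_carrier[OF x] .
  have key: "raag_gen V E b \<otimes>\<^bsub>RAAG V E\<^esub> (raag_gen V E x \<otimes>\<^bsub>RAAG V E\<^esub> d)
             = (raag_gen V E x \<otimes>\<^bsub>RAAG V E\<^esub> d) \<otimes>\<^bsub>RAAG V E\<^esub> raag_gen V E b" if "E b x" for b
  proof -
    have gb: "raag_gen V E b \<in> carrier (RAAG V E)" using raag_gen_carrier[OF E_in_V[OF that]] .
    show ?thesis
      using G.commute_mult_right[OF gb gx d raag_gen_commute_edge[OF that] central[OF gb]] .
  qed
  fix a b assume e: "E a b" "a \<in> V" "b \<in> V"
  have ab: "a \<noteq> b" using e(1) E_irrefl by blast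
  consider "a = x" | "b = x" | "a \<noteq> x" "b \<noteq> x" by blast
  then show "transvection_images x d a \<otimes>\<^bsub>RAAG V E\<^esub> transvection_images x d b
             = transvection_images x d b \<otimes>\<^bsub>RAAG V E\<^esub> transvection_images x d a"
  proof cases
    case 1
    then show ?thesis using key[of b] E_sym[OF e(1)] ab by (simp add: transvection_images_def)
  next
    case 2
    then show ?thesis using key[of a] e(1) ab by (simp add: transvection_images_def)
  next
    case 3
    then show ?thesis using raag_gen_commute_edge[OF e(1)] by (simp add: transvection_images_def)
  qed
next
  fix v assume "v \<in> V"
  then show "transvection_images x d v \<in> carrier (RAAG V E)"
    using monoid.m_closed[OF group.is_monoid[OF group_RAAG] raag_gen_carrier[OF x] d]
    by (simp add: transvection_images_def raag_gen_carrier)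
qed

lemma raag_assignment_cone_transvection:
  assumes "x \<in> V" "c \<in> cone_vertices V E" "x \<noteq> c"
  shows "raag_assignment V E (RAAG V E) (transvection_images x (raag_gen V E c))"
    "raag_assignment V E (RAAG V E) (transvection_images x (inv\<^bsub>RAAG V E\<^esub> raag_gen V E c))"
proof -
  interpret G: group "RAAG V E" by (rule group_RAAG)
  have gc: "raag_gen V E c \<in> carrier (RAAG V E)"
    using assms(2) raag_gen_carrier by (auto simp: cone_vertices_def)
  show "raag_assignment V E (RAAG V E) (transvection_images x (raag_gen V E c))"
    using cone_gen_central[OF assms(2)] by (intro raag_assignment_transvection assms(1) gc) simp
  show "raag_assignment V E (RAAG V E) (transvection_images x (inv\<^bsub>RAAG V E\<^esub> raag_gen V E c))"
    using cone_gen_central[OF assms(2)] G.inv_commute[OF gc]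
    by (intro raag_assignment_transvection assms(1)) (simp_all add: gc)
qed

definition transvection :: "'v \<Rightarrow> 'v \<Rightarrow> ('v \<times> bool) list set \<Rightarrow> ('v \<times> bool) list set" where
  "transvection x c =
     restrict (raag_lift (RAAG V E) (transvection_images x (raag_gen V E c))) (carrier (RAAG V E))"

lemma transvection_gen:
  "x \<in> V \<Longrightarrow> c \<in> cone_vertices V E \<Longrightarrow> x \<noteq> c \<Longrightarrow> v \<in> V \<Longrightarrow>
   transvection x c (raag_gen V E v) = transvection_images x (raag_gen V E c) v"
  using raag_assignment.raag_lift_gen[OF raag_assignment_cone_transvection(1)]
  by (simp add: transvection_def raag_gen_carrier)

lemma transvection_auto:
  assumes x: "x \<in> V" and c: "c \<in> cone_vertices V E" and xc: "x \<noteq> c"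
  shows "transvection x c \<in> auto (RAAG V E)"
proof -
  interpret G: group "RAAG V E" by (rule group_RAAG)
  let ?c = "raag_gen V E c"
  let ?f = "transvection_images x ?c" and ?g = "transvection_images x (inv\<^bsub>RAAG V E\<^esub> ?c)"
  note hf = raag_assignment_cone_transvection(1)[OF x c xc]
    and hg = raag_assignment_cone_transvection(2)[OF x c xc]
  interpret F: group_hom "RAAG V E" "RAAG V E" "raag_lift (RAAG V E) ?f"
    by (rule raag_assignment.raag_lift_group_hom[OF hf])
  interpret G': group_hom "RAAG V E" "RAAG V E" "raag_lift (RAAG V E) ?g"
    by (rule raag_assignment.raag_lift_group_hom[OF hg])
  have cV: "c \<in> V" using c by (simp add: cone_vertices_def)
  have gx: "raag_gen V E x \<in> carrier (RAAG V E)" and gc: "?c \<in> carrier (RAAG V E)"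
    by (simp_all add: raag_gen_carrier x cV)
  have lift_f: "raag_lift (RAAG V E) ?f (raag_gen V E v) = ?f v"
    and lift_g: "raag_lift (RAAG V E) ?g (raag_gen V E v) = ?g v" if "v \<in> V" for v
    using raag_assignment.raag_lift_gen[OF hf that] raag_assignment.raag_lift_gen[OF hg that]
    by simp_all
  have "raag_lift (RAAG V E) ?g (?f v) = raag_gen V E v \<and>
        raag_lift (RAAG V E) ?f (?g v) = raag_gen V E v"
    if v: "v \<in> V" for v
  proof (cases "v = x")
    case True
    have "raag_lift (RAAG V E) ?g (?f x)
          = (raag_gen V E x \<otimes>\<^bsub>RAAG V E\<^esub> inv\<^bsub>RAAG V E\<^esub> ?c) \<otimes>\<^bsub>RAAG V E\<^esub> ?c"
      "raag_lift (RAAG V E) ?f (?g x)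
          = (raag_gen V E x \<otimes>\<^bsub>RAAG V E\<^esub> ?c) \<otimes>\<^bsub>RAAG V E\<^esub> inv\<^bsub>RAAG V E\<^esub> ?c"
      using lift_f[OF x] lift_f[OF cV] lift_g[OF x] lift_g[OF cV] xc gx gc
      by (simp_all add: transvection_images_def)
    then show ?thesis using True gx gc by (simp add: G.m_assoc)
  qed (simp_all add: v lift_f lift_g transvection_images_def)
  then show ?thesis
    unfolding transvection_def by (intro raag_lift_auto[OF hf hg]) simp_all
qed

lemma exponent_sum_add_hom:
  "(\<lambda>y. exponent_sum c y + exponent_sum x y) \<in> hom (RAAG V E) integer_group"
  by (rule homI) (auto simp: hom_mult[OF exponent_sum_hom])

lemma exponent_sum_transvection:
  assumes x: "x \<in> V" and c: "c \<in> cone_vertices V E" and xc: "x \<noteq> c"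
    and y: "y \<in> carrier (RAAG V E)"
  shows "exponent_sum c (transvection x c y) = exponent_sum c y + exponent_sum x y"
proof -
  have cV: "c \<in> V" using c by (simp add: cone_vertices_def)
  have th: "transvection x c \<in> hom (RAAG V E) (RAAG V E)"
    using transvection_auto[OF x c xc] auto_imp_hom by blast
  have "(exponent_sum c \<circ> transvection x c) y = exponent_sum c y + exponent_sum x y"
  proof (rule hom_eq_on_gens[OF group_integer_group hom_compose[OF th exponent_sum_hom]
        exponent_sum_add_hom _ y])
    fix v assume v: "v \<in> V"
    have gx: "raag_gen V E x \<in> carrier (RAAG V E)" and gc: "raag_gen V E c \<in> carrier (RAAG V E)"
      by (simp_all add: raag_gen_carrier x cV)
    show "(exponent_sum c \<circ> transvection x c) (raag_gen V E v)
          = exponent_sum c (raag_gen V E v) + exponent_sum x (raag_gen V E v)"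
      using transvection_gen[OF x c xc v] hom_mult[OF exponent_sum_hom gx gc] xc
      by (auto simp: transvection_images_def exponent_sum_gen)
  qed
  then show ?thesis by simp
qed

end

section \<open>Central automorphisms\<close>

context raag_graph
begin

lemma auto_eq_restrict_hom:
  assumes "\<phi> \<in> auto (RAAG V E)" "h \<in> hom (RAAG V E) (RAAG V E)"
    and "\<And>v. v \<in> V \<Longrightarrow> \<phi> (raag_gen V E v) = h (raag_gen V E v)"
  shows "\<phi> = (\<lambda>x\<in>carrier (RAAG V E). h x)"
proof
  fix x
  show "\<phi> x = (\<lambda>x\<in>carrier (RAAG V E). h x) x"
    using hom_eq_on_gens[OF group_RAAG auto_imp_hom[OF assms(1)] assms(2,3)]
      auto_imp_extensional[OF assms(1)]
    by (cases "x \<in> carrier (RAAG V E)") (auto simp: extensional_def)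
qed

text \<open>Commuting with the inversion of \<open>u\<close>, which fixes \<open>v\<close>, forces the \<open>u\<close>-exponent of
  \<open>v\<^sup>-\<^sup>1\<phi>(v)\<close> to vanish.\<close>

lemma central_auto_exponent_sum:
  assumes p: "\<phi> \<in> group_center (AutoGroup (RAAG V E))" and v: "v \<in> V" and uv: "u \<noteq> v"
  shows "exponent_sum u (inv\<^bsub>RAAG V E\<^esub> raag_gen V E v \<otimes>\<^bsub>RAAG V E\<^esub> \<phi> (raag_gen V E v)) = 0"
proof -
  interpret G: group "RAAG V E" by (rule group_RAAG)
  have pa: "\<phi> \<in> auto (RAAG V E)" using central_auto_in_auto[OF p] .
  interpret ph: group_hom "RAAG V E" "RAAG V E" \<phi> by (rule group.group_hom_auto[OF group_RAAG pa])
  interpret io: group_hom "RAAG V E" "RAAG V E" "inversion u"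
    by (rule group.group_hom_auto[OF group_RAAG inversion_auto])
  let ?z = "inv\<^bsub>RAAG V E\<^esub> raag_gen V E v \<otimes>\<^bsub>RAAG V E\<^esub> \<phi> (raag_gen V E v)"
  have gv: "raag_gen V E v \<in> carrier (RAAG V E)" using raag_gen_carrier[OF v] .
  have i1: "inversion u (raag_gen V E v) = raag_gen V E v"
    using inversion_gen[OF v] uv by (simp add: inversion_images_def)
  then have "\<phi> (raag_gen V E v) = inversion u (\<phi> (raag_gen V E v))"
    using central_auto_commute[OF p inversion_auto[of u] gv] by simp
  then have "inversion u (\<phi> (raag_gen V E v)) = \<phi> (raag_gen V E v)" by (rule sym)
  then have "inversion u ?z = ?z" using i1 gv by simp
  then show ?thesis using exponent_sum_inversion[of ?z u] gv by simp
qed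

lemma central_auto_gen_pow:
  assumes p: "\<phi> \<in> group_center (AutoGroup (RAAG V E))" and v: "v \<in> V"
  obtains m where "\<phi> (raag_gen V E v) = raag_class V E (gen_pow v m)"
    and "v \<notin> cone_vertices V E \<Longrightarrow> m = 1"
proof -
  interpret G: group "RAAG V E" by (rule group_RAAG)
  have pa: "\<phi> \<in> auto (RAAG V E)" using central_auto_in_auto[OF p] .
  interpret ph: group_hom "RAAG V E" "RAAG V E" \<phi> by (rule group.group_hom_auto[OF group_RAAG pa])
  have gv: "raag_gen V E v \<in> carrier (RAAG V E)" using raag_gen_carrier[OF v] .
  define z where "z = inv\<^bsub>RAAG V E\<^esub> raag_gen V E v \<otimes>\<^bsub>RAAG V E\<^esub> \<phi> (raag_gen V E v)"
  have "z \<in> carrier (RAAG V E)" using gv by (simp add: z_def)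
  moreover have "\<forall>g\<in>carrier (RAAG V E). z \<otimes>\<^bsub>RAAG V E\<^esub> g = g \<otimes>\<^bsub>RAAG V E\<^esub> z"
    using G.central_auto_quotient_central[OF p gv] by (simp add: z_def)
  ultimately obtain w where w: "w \<in> raag_word V" "z = raag_class V E w"
    and cone: "\<forall>a\<in>set w. fst a \<in> cone_vertices V E"
    by (rule central_element_cone_word)
  have "exp_sum u (filter (\<lambda>a. fst a \<noteq> v) w) = 0" for u
    using central_auto_exponent_sum[OF p v, of u] w(2)
    by (cases "u = v") (simp_all add: exp_sum_filter z_def exponent_sum_class)
  then have "(filter (\<lambda>a. fst a \<noteq> v) w, []) \<in> raag_eq V E"
    using cone by (intro cone_word_trivial) auto
  then have "(w, gen_pow v (exp_sum v w)) \<in> raag_eq V E"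
    using raag_eq_trans[OF cone_word_collect[OF cone v] raag_eq_congL] v by fastforce
  then have "z = raag_class V E (gen_pow v (exp_sum v w))"
    using w(2) by (simp add: raag_class_eq_iff)
  moreover have "\<phi> (raag_gen V E v) = raag_gen V E v \<otimes>\<^bsub>RAAG V E\<^esub> z"
    using gv by (simp add: z_def G.m_assoc[symmetric])
  ultimately have "\<phi> (raag_gen V E v) = raag_class V E ((v, True) # gen_pow v (exp_sum v w))"
    using v by (simp add: raag_gen_def mult_RAAG)
  also have "\<dots> = raag_class V E (gen_pow v (exp_sum v w + 1))"
    using gen_pow_Cons[OF v, of True "exp_sum v w" E] by (simp add: raag_class_eq_iff add.commute)
  finally have "\<phi> (raag_gen V E v) = raag_class V E (gen_pow v (exp_sum v w + 1))" .
  moreover have "exp_sum v w = 0" if "v \<notin> cone_vertices V E"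
    using cone that by (intro exp_sum_not_occurring) auto
  ultimately show thesis using that by auto
qed

text \<open>A cone vertex \<open>c\<close> is fixed because \<open>\<phi>\<close> fixes \<open>x\<close> and commutes with the transvection
  \<open>x \<mapsto> xc\<close>.\<close>

lemma central_auto_fixes_gens:
  assumes p: "\<phi> \<in> group_center (AutoGroup (RAAG V E))" and x: "x \<in> V" "x \<notin> cone_vertices V E"
    and v: "v \<in> V"
  shows "\<phi> (raag_gen V E v) = raag_gen V E v"
proof -
  interpret G: group "RAAG V E" by (rule group_RAAG)
  have pa: "\<phi> \<in> auto (RAAG V E)" using central_auto_in_auto[OF p] .
  interpret ph: group_hom "RAAG V E" "RAAG V E" \<phi> by (rule group.group_hom_auto[OF group_RAAG pa])
  have non_cone: "\<phi> (raag_gen V E u) = raag_gen V E u" if "u \<in> V" "u \<notin> cone_vertices V E" for u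
    using central_auto_gen_pow[OF p that(1)] that(2) by (metis gen_pow_1 raag_gen_def)
  show ?thesis
  proof (cases "v \<in> cone_vertices V E")
    case True
    have xv: "x \<noteq> v" using x True by auto
    have gx: "raag_gen V E x \<in> carrier (RAAG V E)" and gv: "raag_gen V E v \<in> carrier (RAAG V E)"
      by (simp_all add: raag_gen_carrier x v)
    have t: "transvection x v (raag_gen V E x) = raag_gen V E x \<otimes>\<^bsub>RAAG V E\<^esub> raag_gen V E v"
      using transvection_gen[OF x(1) True xv x(1)] by (simp add: transvection_images_def)
    have "raag_gen V E x \<otimes>\<^bsub>RAAG V E\<^esub> \<phi> (raag_gen V E v) = \<phi> (transvection x v (raag_gen V E x))"
      using t gx gv non_cone[OF x] by simp
    also have "\<dots> = transvection x v (\<phi> (raag_gen V E x))"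
      by (rule central_auto_commute[OF p transvection_auto[OF x(1) True xv] gx])
    also have "\<dots> = raag_gen V E x \<otimes>\<^bsub>RAAG V E\<^esub> raag_gen V E v"
      using t non_cone[OF x] by simp
    finally show ?thesis using gx gv by simp
  qed (use non_cone v in blast)
qed

lemma center_AutoGroup_non_cone:
  assumes "x \<in> V" "x \<notin> cone_vertices V E"
  shows "group_center (AutoGroup (RAAG V E)) = {\<one>\<^bsub>AutoGroup (RAAG V E)\<^esub>}"
proof
  interpret A: group "AutoGroup (RAAG V E)" by (rule group.AutoGroup[OF group_RAAG])
  show "{\<one>\<^bsub>AutoGroup (RAAG V E)\<^esub>} \<subseteq> group_center (AutoGroup (RAAG V E))"
    by (simp add: group_center_def)
  show "group_center (AutoGroup (RAAG V E)) \<subseteq> {\<one>\<^bsub>AutoGroup (RAAG V E)\<^esub>}"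
  proof
    fix \<phi> assume p: "\<phi> \<in> group_center (AutoGroup (RAAG V E))"
    have "\<phi> = (\<lambda>x\<in>carrier (RAAG V E). x)"
      using auto_eq_restrict_hom[OF central_auto_in_auto[OF p] id_in_hom]
        central_auto_fixes_gens[OF p assms] by simp
    then show "\<phi> \<in> {\<one>\<^bsub>AutoGroup (RAAG V E)\<^esub>}" by (simp add: one_AutoGroup)
  qed
qed

end

section \<open>The free abelian case\<close>

lemma hom_free_Abelian_group_eq_id:
  assumes h: "h \<in> hom (free_Abelian_group S) (free_Abelian_group S)"
    and gens: "\<And>a. a \<in> S \<Longrightarrow> h (frag_of a) = frag_of a"
    and y: "y \<in> carrier (free_Abelian_group S)"
  shows "h y = y"
proof (rule free_Abelian_group_induct[of y S "\<lambda>y. h y = y"])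
  interpret h: group_hom "free_Abelian_group S" "free_Abelian_group S" h
    by (rule group_hom.intro) (auto simp: group_hom_axioms_def h)
  show "h 0 = 0" using h.hom_one by simp
  show "h (a - b) = a - b"
    if "Poly_Mapping.keys a \<subseteq> S" "Poly_Mapping.keys b \<subseteq> S" "h a = a" "h b = b" for a b
    using hom_frag_diff[OF h that(1,2)] that(3,4) by simp
qed (use y gens in auto)

context raag_graph
begin

lemma comm_group_RAAG:
  assumes cV: "cone_vertices V E = V"
  shows "comm_group (RAAG V E)"
proof (rule group.group_comm_groupI[OF group_RAAG])
  interpret G: group "RAAG V E" by (rule group_RAAG)
  fix x y assume x: "x \<in> carrier (RAAG V E)" and y: "y \<in> carrier (RAAG V E)"
  have "(\<lambda>x\<in>carrier (RAAG V E). y \<otimes>\<^bsub>RAAG V E\<^esub> x \<otimes>\<^bsub>RAAG V E\<^esub> inv\<^bsub>RAAG V E\<^esub> y) x = x"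
  proof (rule hom_eq_on_gens[OF group_RAAG auto_imp_hom[OF G.inner_auto[OF y]] id_in_hom _ x])
    fix v assume v: "v \<in> V"
    have "y \<otimes>\<^bsub>RAAG V E\<^esub> raag_gen V E v = raag_gen V E v \<otimes>\<^bsub>RAAG V E\<^esub> y"
      using cone_gen_central[of v y] v cV y by simp
    then show "(\<lambda>x\<in>carrier (RAAG V E). y \<otimes>\<^bsub>RAAG V E\<^esub> x \<otimes>\<^bsub>RAAG V E\<^esub> inv\<^bsub>RAAG V E\<^esub> y) (raag_gen V E v)
               = raag_gen V E v"
      using y raag_gen_carrier[OF v] by (simp add: G.m_assoc)
  qed
  then have "y \<otimes>\<^bsub>RAAG V E\<^esub> x \<otimes>\<^bsub>RAAG V E\<^esub> inv\<^bsub>RAAG V E\<^esub> y \<otimes>\<^bsub>RAAG V E\<^esub> y = x \<otimes>\<^bsub>RAAG V E\<^esub> y"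
    using x by simp
  then show "x \<otimes>\<^bsub>RAAG V E\<^esub> y = y \<otimes>\<^bsub>RAAG V E\<^esub> x"
    using x y by (simp add: G.m_assoc)
qed

text \<open>Commuting with the transvection \<open>v \<mapsto> vv\<^sub>0\<close> equates the exponents of \<open>v\<close> and \<open>v\<^sub>0\<close>.\<close>

lemma central_auto_uniform_power:
  assumes cV: "cone_vertices V E = V" and p: "\<phi> \<in> group_center (AutoGroup (RAAG V E))"
    and v0: "v0 \<in> V"
  obtains m where "\<And>v. v \<in> V \<Longrightarrow> \<phi> (raag_gen V E v) = raag_class V E (gen_pow v m)"
proof -
  have pa: "\<phi> \<in> auto (RAAG V E)" using central_auto_in_auto[OF p] .
  interpret ph: group_hom "RAAG V E" "RAAG V E" \<phi> by (rule group.group_hom_auto[OF group_RAAG pa])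
  have "\<forall>v\<in>V. \<exists>m. \<phi> (raag_gen V E v) = raag_class V E (gen_pow v m)"
  proof
    fix v assume "v \<in> V"
    then show "\<exists>m. \<phi> (raag_gen V E v) = raag_class V E (gen_pow v m)"
      by (rule central_auto_gen_pow[OF p]) blast
  qed
  from bchoice[OF this]
  obtain M where M: "\<forall>v\<in>V. \<phi> (raag_gen V E v) = raag_class V E (gen_pow v (M v))"
    by blast
  have "M v = M v0" if v: "v \<in> V" "v \<noteq> v0" for v
  proof -
    have c0: "v0 \<in> cone_vertices V E" using cV v0 by simp
    have gv: "raag_gen V E v \<in> carrier (RAAG V E)" and g0: "raag_gen V E v0 \<in> carrier (RAAG V E)"
      by (simp_all add: raag_gen_carrier v v0)
    have t: "transvection v v0 (raag_gen V E v) = raag_gen V E v \<otimes>\<^bsub>RAAG V E\<^esub> raag_gen V E v0"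
      using transvection_gen[OF v(1) c0 v(2) v(1)] by (simp add: transvection_images_def)
    have "M v0 = exponent_sum v0 (\<phi> (transvection v v0 (raag_gen V E v)))"
      using M[rule_format, OF v(1)] M[rule_format, OF v0] gv g0 v
      by (simp add: t hom_mult[OF exponent_sum_hom] exponent_sum_gen_pow v0)
    also have "\<dots> = exponent_sum v0 (transvection v v0 (\<phi> (raag_gen V E v)))"
      using central_auto_commute[OF p transvection_auto[OF v(1) c0 v(2)] gv] by simp
    also have "\<dots> = M v"
      using exponent_sum_transvection[OF v(1) c0 v(2)] M[rule_format, OF v(1)] v
      by (simp add: exponent_sum_gen_pow)
    finally show ?thesis by simp
  qed
  then show thesis using M by (intro that[of "M v0"]) (metis (no_types))
qed

text \<open>Surjectivity: \<open>v\<^sub>0\<close> lies in the image, whose \<open>v\<^sub>0\<close>-exponents are multiples of \<open>m\<close>.\<close>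

lemma auto_uniform_power_unit:
  assumes pa: "\<phi> \<in> auto (RAAG V E)" and v0: "v0 \<in> V"
    and m: "\<And>v. v \<in> V \<Longrightarrow> \<phi> (raag_gen V E v) = raag_class V E (gen_pow v m)"
  shows "m = 1 \<or> m = -1"
proof -
  have "raag_gen V E v0 \<in> \<phi> ` carrier (RAAG V E)"
    using auto_imp_bij_betw[OF pa] raag_gen_carrier[OF v0] by (simp add: bij_betw_def)
  then obtain y where y: "y \<in> carrier (RAAG V E)" "raag_gen V E v0 = \<phi> y" by auto
  have "(exponent_sum v0 \<circ> \<phi>) y = m * exponent_sum v0 y"
  proof (rule hom_eq_on_gens[OF group_integer_group
        hom_compose[OF auto_imp_hom[OF pa] exponent_sum_hom] exponent_sum_scale_hom _ y(1)])
    fix u assume "u \<in> V"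
    then show "(exponent_sum v0 \<circ> \<phi>) (raag_gen V E u) = m * exponent_sum v0 (raag_gen V E u)"
      using m by (simp add: exponent_sum_gen_pow exponent_sum_gen)
  qed
  then have "m * exponent_sum v0 y = 1" using y(2)[symmetric] by (simp add: exponent_sum_gen)
  then show ?thesis by (rule pos_zmult_eq_1_iff_lemma)
qed

lemma inv_hom_RAAG:
  assumes "cone_vertices V E = V"
  shows "(\<lambda>x. inv\<^bsub>RAAG V E\<^esub> x) \<in> hom (RAAG V E) (RAAG V E)"
proof -
  interpret G: comm_group "RAAG V E" by (rule comm_group_RAAG[OF assms])
  show ?thesis by (rule homI) (simp_all add: G.inv_mult)
qed

lemma center_AutoGroup_cone:
  assumes cV: "cone_vertices V E = V"
  shows "group_center (AutoGroup (RAAG V E)) \<subseteq>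
           {(\<lambda>x\<in>carrier (RAAG V E). x), (\<lambda>x\<in>carrier (RAAG V E). inv\<^bsub>RAAG V E\<^esub> x)}"
proof
  fix \<phi> assume p: "\<phi> \<in> group_center (AutoGroup (RAAG V E))"
  have pa: "\<phi> \<in> auto (RAAG V E)" using central_auto_in_auto[OF p] .
  consider "V = {}" | v0 where "v0 \<in> V" by blast
  then show "\<phi> \<in> {(\<lambda>x\<in>carrier (RAAG V E). x), (\<lambda>x\<in>carrier (RAAG V E). inv\<^bsub>RAAG V E\<^esub> x)}"
  proof cases
    case 1
    then show ?thesis using auto_eq_restrict_hom[OF pa id_in_hom] by simp
  next
    case (2 v0)
    obtain m where m: "\<And>v. v \<in> V \<Longrightarrow> \<phi> (raag_gen V E v) = raag_class V E (gen_pow v m)"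
      using central_auto_uniform_power[OF cV p 2] by blast
    consider "m = 1" | "m = -1" using auto_uniform_power_unit[OF pa 2 m] by blast
    then show ?thesis
    proof cases
      case 1
      then show ?thesis
        using auto_eq_restrict_hom[OF pa id_in_hom] m by (simp add: gen_pow_1 raag_gen_def)
    next
      case 2
      then show ?thesis
        using auto_eq_restrict_hom[OF pa inv_hom_RAAG[OF cV]] m
        by (simp add: gen_pow_minus_1 raag_class_letter)
    qed
  qed
qed

lemma RAAG_iso_free_Abelian_group:
  assumes cV: "cone_vertices V E = V" and fin: "finite V"
  shows "\<exists>S :: nat set. RAAG V E \<cong> free_Abelian_group S"
proof -
  interpret G: comm_group "RAAG V E" by (rule comm_group_RAAG[OF cV])
  have rh: "raag_assignment V E (free_Abelian_group V) frag_of"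
  proof (rule raag_assignment.intro)
    fix u v
    show "frag_of u \<otimes>\<^bsub>free_Abelian_group V\<^esub> frag_of v = frag_of v \<otimes>\<^bsub>free_Abelian_group V\<^esub> frag_of u"
      by (simp only: mult_free_Abelian_group add.commute)
  qed simp_all
  define \<theta> where "\<theta> = raag_lift (free_Abelian_group V) frag_of"
  have th: "\<theta> \<in> hom (RAAG V E) (free_Abelian_group V)"
    unfolding \<theta>_def by (rule raag_assignment.raag_lift_hom[OF rh])
  have thg: "\<theta> (raag_gen V E v) = frag_of v" if "v \<in> V" for v
    unfolding \<theta>_def using raag_assignment.raag_lift_gen[OF rh that] .
  obtain \<kappa> where ka: "\<kappa> \<in> hom (free_Abelian_group V) (RAAG V E)"
    and kag: "\<And>v. v \<in> V \<Longrightarrow> \<kappa> (frag_of v) = raag_gen V E v"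
  proof -
    have "raag_gen V E ` V \<subseteq> carrier (RAAG V E)" using raag_gen_carrier[of _ V E] by blast
    from G.free_Abelian_group_universal[OF this] show ?thesis using that by metis
  qed
  have kt: "\<kappa> (\<theta> x) = x" if x: "x \<in> carrier (RAAG V E)" for x
    using hom_eq_on_gens[OF group_RAAG hom_compose[OF th ka] id_in_hom _ x] thg kag by simp
  have tk: "\<theta> (\<kappa> y) = y" if "y \<in> carrier (free_Abelian_group V)" for y
    using hom_free_Abelian_group_eq_id[OF hom_compose[OF ka th] _ that] kag thg by simp
  have "bij_betw \<theta> (carrier (RAAG V E)) (carrier (free_Abelian_group V))"
    by (rule bij_betwI[where g = \<kappa>]) (use th ka kt tk in \<open>auto simp: hom_def\<close>)
  then have "RAAG V E \<cong> free_Abelian_group V"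
    using th by (auto simp: is_iso_def iso_def)
  moreover have "V \<approx> {..<card V}" using eqpoll_iff_card[OF fin, of "{..<card V}"] by simp
  then have "free_Abelian_group V \<cong> free_Abelian_group {..<card V}"
    using isomorphic_free_Abelian_groups by blast
  ultimately have "RAAG V E \<cong> free_Abelian_group {..<card V}" by (rule iso_trans)
  then show ?thesis by blast
qed

end

theorem mainTheorem8:
  fixes V :: "'v set" and E :: "'v \<Rightarrow> 'v \<Rightarrow> bool"
  assumes "simplicial_graph V E"
  shows "finite (group_center (AutoGroup (RAAG V E)))
           \<and> card (group_center (AutoGroup (RAAG V E))) \<le> 2
           \<and> (\<not> (\<exists>S :: nat set. RAAG V E \<cong> free_Abelian_group S)
                \<longrightarrow> group_center (AutoGroup (RAAG V E)) = {\<one>\<^bsub>AutoGroup (RAAG V E)\<^esub>})"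
proof -
  have fin: "finite V"
    using assms by (simp add: simplicial_graph_def)
  interpret raag_graph E V
    using assms unfolding simplicial_graph_def by unfold_locales blast+
  show ?thesis
  proof (cases "cone_vertices V E = V")
    case True
    let ?Z = "group_center (AutoGroup (RAAG V E))"
    let ?S = "{(\<lambda>x\<in>carrier (RAAG V E). x), (\<lambda>x\<in>carrier (RAAG V E). inv\<^bsub>RAAG V E\<^esub> x)}"
    have sub: "?Z \<subseteq> ?S" by (rule center_AutoGroup_cone[OF True])
    have "card ?Z \<le> card ?S" by (rule card_mono[OF _ sub]) simp
    also have "\<dots> \<le> 2" by (simp add: card_insert_if)
    finally have "card ?Z \<le> 2" .
    moreover have "\<exists>S :: nat set. RAAG V E \<cong> free_Abelian_group S"
      using RAAG_iso_free_Abelian_group[OF True fin] .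
    ultimately show ?thesis using finite_subset[OF sub] by blast
  next
    case False
    then obtain x where "x \<in> V" "x \<notin> cone_vertices V E" by (auto simp: cone_vertices_def)
    then show ?thesis by (simp add: center_AutoGroup_non_cone)
  qed
qed

end
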